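(* Let $a$ be a strongly regular scale factor (extended evenly to negative arguments), and suppose that either (i) $\dot a(0^+)=0$ and there is $\epsilon>0$ with $\ddot a(t)\ge0$ on $(0,\epsilon)$, or (ii) $\infty>\dot a(0^+)>0$. Then the partial derivative $\partial_\rho g_{\tau\tau}$ (which exists at every point of $D$) is continuous on $D$.
   Context: A function $a:[0,\infty)\to[0,\infty)$ is a regular scale factor if: (a) $a(0)=0$; (b) $a$ is increasing and continuous on $[0,\infty)$, twice continuously differentiable on $(0,\infty)$, with an inverse function on $[0,\infty)$; (c) $\frac{a(t)\ddot a(t)}{\dot a(t)^2}\le1$ for all $t>0$ (presupposing $\dot a(t)\ne0$). It is strongly regular if also $\frac{a\ddot a}{\dot a^2}\ge-K$ on $(0,\infty)$ for a constant $K\ge1$. $\dot a(0^+)=\lim_{t\to0^+}\dot a(t)$. Extend $a$ by $a(-t)=a(t)$. For $\tau>0$, $\rho_{\mathcal M_\tau}=\int_0^\tau\frac{a(t)}{\sqrt{a^2(\tau)-a^2(t)}}dt$ and $D=\{(\tau,\rho):\tau>0,\ 0<\rho<2\rho_{\mathcal M_\tau}\}$. For $(\tau,\rho)\in D$, $t_0(\tau,\rho)$ is the unique $t_0\in(-\tau,\tau)$ with $\rho=\int_{t_0}^\tau\frac{a(t)}{\sqrt{a^2(\tau)-a^2(t)}}dt$. For $0\le t_0<\tau$, $f(\tau,t_0)=\int_{t_0}^{\tau}\frac{\ddot a(t)}{\dot a(t)^2}\left(\frac{\sqrt{a^2(\tau)-a^2(t_0)}}{\sqrt{a^2(\tau)-a^2(t)}}-1\right)dt$;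 for $-\tau<t_0<0$, $f(\tau,t_0)=2f(\tau,0)-f(\tau,-t_0)$. Finally $g_{\tau\tau}(\tau,\rho)=-[1-\dot a(\tau)f(\tau,t_0(\tau,\rho))]^2$ on $D$. *)

theory Defs
  imports "HOL-Analysis.Analysis"
begin

text \<open>Regular scale factor a : [0,inf) -> [0,inf) (values of a on negative reals are irrelevant here).\<close>
definition regular_scale_factor :: "(real \<Rightarrow> real) \<Rightarrow> bool" where
  "regular_scale_factor a \<longleftrightarrow>
     a 0 = 0 \<and>
     (\<forall>t\<ge>0. a t \<ge> 0) \<and>
     strict_mono_on {0..} a \<and>
     continuous_on {0..} a \<and>
     (\<forall>t>0. a differentiable (at t)) \<and>
     (\<forall>t>0. deriv a differentiable (at t)) \<and>
     continuous_on {0<..} (deriv (deriv a)) \<and>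
     (\<forall>t>0. deriv a t \<noteq> 0 \<and>
            a t * deriv (deriv a) t / (deriv a t)\<^sup>2 \<le> 1)"

definition strongly_regular_scale_factor :: "(real \<Rightarrow> real) \<Rightarrow> bool" where
  "strongly_regular_scale_factor a \<longleftrightarrow>
     regular_scale_factor a \<and>
     (\<exists>K\<ge>1. \<forall>t>0. a t * deriv (deriv a) t / (deriv a t)\<^sup>2 \<ge> - K)"

definition rhoM :: "(real \<Rightarrow> real) \<Rightarrow> real \<Rightarrow> real" where
  "rhoM a \<tau> = integral {0..\<tau>} (\<lambda>t. a t / sqrt ((a \<tau>)\<^sup>2 - (a t)\<^sup>2))"

definition domD :: "(real \<Rightarrow> real) \<Rightarrow> (real \<times> real) set" where
  "domD a = {(\<tau>, \<rho>). \<tau> > 0 \<and> 0 < \<rho> \<and> \<rho> < 2 * rhoM a \<tau>}"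

definition t0 :: "(real \<Rightarrow> real) \<Rightarrow> real \<Rightarrow> real \<Rightarrow> real" where
  "t0 a \<tau> \<rho> = (THE s. -\<tau> < s \<and> s < \<tau> \<and>
      \<rho> = integral {s..\<tau>} (\<lambda>t. a t / sqrt ((a \<tau>)\<^sup>2 - (a t)\<^sup>2)))"

definition fpos :: "(real \<Rightarrow> real) \<Rightarrow> real \<Rightarrow> real \<Rightarrow> real" where
  "fpos a \<tau> s = integral {s..\<tau>} (\<lambda>t. deriv (deriv a) t / (deriv a t)\<^sup>2 *
      (sqrt ((a \<tau>)\<^sup>2 - (a s)\<^sup>2) / sqrt ((a \<tau>)\<^sup>2 - (a t)\<^sup>2) - 1))"

definition ff :: "(real \<Rightarrow> real) \<Rightarrow> real \<Rightarrow> real \<Rightarrow> real" where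
  "ff a \<tau> s = (if 0 \<le> s then fpos a \<tau> s else 2 * fpos a \<tau> 0 - fpos a \<tau> (- s))"

definition gtt :: "(real \<Rightarrow> real) \<Rightarrow> real \<Rightarrow> real \<Rightarrow> real" where
  "gtt a \<tau> \<rho> = - (1 - deriv a \<tau> * ff a \<tau> (t0 a \<tau> \<rho>))\<^sup>2"

end

theory Submission
  imports Defs
begin

text \<open>The substitution \<open>t = \<tau> - v\<^sup>2\<close> turns \<open>\<rho> = \<integral>\<^bsub>t\<^sub>0\<^esub>\<^sup>\<tau> a / sqrt (a(\<tau>)\<^sup>2 - a\<^sup>2)\<close> and the integral
  defining \<open>f\<close> into integrals over \<open>[0, 1]\<close> of jointly continuous integrands. Hence \<open>\<rho>\<close> is a
  continuous function of \<open>(\<tau>, t\<^sub>0)\<close>, strictly decreasing in \<open>t\<^sub>0\<close>, and its inverse \<open>t\<^sub>0(\<tau>, \<rho>)\<close> is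
  continuous. With \<open>P = sqrt (a(\<tau>)\<^sup>2 - a(s)\<^sup>2)\<close> and \<open>\<eta> = \<ddot>a/\<dot>a\<^sup>2 (1/P - 1/a(\<tau>))\<close>, for
  \<open>0 < s\<close> one has \<open>f(\<tau>, s) = P \<integral>\<^sub>s\<^sup>\<tau> \<eta> + (P/a(\<tau>) - 1)(1/\<dot>a(s) - 1/\<dot>a(\<tau>))\<close>; the possibly
  divergent \<open>1/\<dot>a(s)\<close> enters only as \<open>-a(s)\<^sup>2/\<dot>a(s)\<close> times a continuous factor, and hypothesis
  (i) or (ii) makes \<open>a\<^sup>2/\<dot>a \<rightarrow> 0\<close> at \<open>0\<^sup>+\<close>, so \<open>f\<close> is continuous up to \<open>s = 0\<close>. By the chain rule
  through \<open>t\<^sub>0\<close>, \<open>\<partial>\<^sub>\<rho> f(\<tau>, t\<^sub>0) = \<dot>a(s) \<integral>\<^sub>s\<^sup>\<tau> \<eta> + (1 - \<dot>a(s)/\<dot>a(\<tau>))/a(\<tau>)\<close> with \<open>s = \<bar>t\<^sub>0\<bar> \<noteq> 0\<close>,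
  which extends continuously to \<open>t\<^sub>0 = 0\<close> through \<open>\<dot>a(0\<^sup>+)\<close>; at that single point
  differentiability follows from the mean value theorem.\<close>

section \<open>Substitution, parameter integrals and implicit functions\<close>

lemma has_integral_sqrt_substitution:
  fixes \<phi> \<psi> :: "real \<Rightarrow> real"
  assumes st: "s < \<tau>" and cont: "continuous_on {0..sqrt (\<tau> - s)} \<psi>"
    and eq: "\<And>v. 0 < v \<Longrightarrow> v < sqrt (\<tau> - s) \<Longrightarrow> \<psi> v = 2 * v * \<phi> (\<tau> - v\<^sup>2)"
  shows "(\<phi> has_integral integral {0..sqrt (\<tau> - s)} \<psi>) {s..\<tau>}"
proof -
  define w where "w = sqrt (\<tau> - s)"
  define \<Psi> where "\<Psi> y = integral {0..y} \<psi>" for y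
  define \<Phi> where "\<Phi> x = - \<Psi> (sqrt (\<tau> - x))" for x
  have int: "\<psi> integrable_on {0..w}" using cont by (simp add: w_def integrable_continuous_real)
  have cont_\<Psi>: "continuous_on {0..w} \<Psi>"
    unfolding \<Psi>_def by (rule indefinite_integral_continuous_1[OF int])
  have "continuous_on {s..\<tau>} \<Phi>"
    unfolding \<Phi>_def by (intro continuous_intros continuous_on_compose2[OF cont_\<Psi>]) (auto simp: w_def)
  moreover have "(\<Phi> has_vector_derivative \<phi> x) (at x)" if x: "x \<in> {s<..<\<tau>}" for x
  proof -
    define y where "y = sqrt (\<tau> - x)"
    have y: "0 < y" "y < w" using x by (auto simp: y_def w_def)
    have "(\<Psi> has_real_derivative \<psi> y) (at y within {0..w})"
      unfolding \<Psi>_def using integral_has_real_derivative[OF cont[folded w_def], of y] y by simp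
    moreover have "at y within {0..w} = at y"
      using y by (intro at_within_interior) simp
    ultimately have d\<Psi>: "(\<Psi> has_real_derivative \<psi> y) (at y)" by simp
    have "((\<lambda>x. sqrt (\<tau> - x)) has_real_derivative - inverse (sqrt (\<tau> - x)) / 2) (at x)"
      using x by (auto intro!: derivative_eq_intros)
    from DERIV_chain2[OF d\<Psi>[unfolded y_def] this]
    have "(\<Phi> has_real_derivative \<psi> y / (2 * y)) (at x)"
      unfolding \<Phi>_def y_def[symmetric] by (auto dest: DERIV_minus simp: field_simps)
    moreover have "\<psi> y / (2 * y) = \<phi> x" using eq[of y] y x by (simp add: y_def w_def)
    ultimately show ?thesis by (simp add: has_real_derivative_iff_has_vector_derivative)
  qed
  ultimately have "(\<phi> has_integral (\<Phi> \<tau> - \<Phi> s)) {s..\<tau>}"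
    using fundamental_theorem_of_calculus_interior[of s \<tau> \<Phi> \<phi>] st by simp
  then show ?thesis by (simp add: \<Phi>_def \<Psi>_def w_def)
qed

lemma integral_rescale_unit_interval:
  fixes \<psi> :: "real \<Rightarrow> real"
  assumes "0 < w" "\<psi> integrable_on {0..w}"
  shows "integral {0..w} \<psi> = integral {0..1} (\<lambda>u. w * \<psi> (w * u))"
proof -
  have "(\<psi> has_integral integral {0..w} \<psi>) (cbox 0 w)"
    using assms(2) by (simp add: integrable_integral)
  from has_integral_affinity'[OF this assms(1), of 0]
  have "((\<lambda>u. \<psi> (w * u)) has_integral integral {0..w} \<psi> / w) {0..1}"
    using assms(1) by (simp add: divide_inverse mult.commute)
  from has_integral_mult_right[OF this, of w] assms(1)
  show ?thesis by (auto dest: integral_unique)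
qed

lemma has_integral_sqrt_substitution_unit:
  fixes \<phi> \<psi> :: "real \<Rightarrow> real"
  assumes "s < \<tau>" and "continuous_on {0..sqrt (\<tau> - s)} \<psi>"
    and "\<And>v. 0 < v \<Longrightarrow> v < sqrt (\<tau> - s) \<Longrightarrow> \<psi> v = 2 * v * \<phi> (\<tau> - v\<^sup>2)"
  shows "(\<phi> has_integral integral {0..1} (\<lambda>u. sqrt (\<tau> - s) * \<psi> (sqrt (\<tau> - s) * u))) {s..\<tau>}"
  using has_integral_sqrt_substitution[OF assms] assms(1,2)
  by (simp add: integral_rescale_unit_interval integrable_continuous_real)

lemma continuous_on_integral_unit_param:
  fixes \<psi> :: "real \<Rightarrow> real \<Rightarrow> real" and S U :: "(real \<times> real) set"
  assumes cont: "continuous_on U (\<lambda>p. \<psi> (fst p) (snd p))"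
    and into: "\<And>\<tau> s u. (\<tau>, s) \<in> S \<Longrightarrow> 0 \<le> u \<Longrightarrow> u \<le> 1 \<Longrightarrow> (\<tau>, sqrt (\<tau> - s) * u) \<in> U"
  shows "continuous_on S (\<lambda>p. integral {0..1}
           (\<lambda>u. sqrt (fst p - snd p) * \<psi> (fst p) (sqrt (fst p - snd p) * u)))"
proof -
  define g where "g z = (fst (fst z), sqrt (fst (fst z) - snd (fst z)) * snd z)"
    for z :: "(real \<times> real) \<times> real"
  have "continuous_on (S \<times> cbox 0 1) g" unfolding g_def by (intro continuous_intros)
  moreover have "g ` (S \<times> cbox 0 1) \<subseteq> U" unfolding g_def using into by auto
  ultimately have "continuous_on (S \<times> cbox 0 1) (\<lambda>z. \<psi> (fst (g z)) (snd (g z)))"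
    using continuous_on_compose2[OF cont] by blast
  then have "continuous_on (S \<times> cbox 0 1)
      (\<lambda>(p, u). sqrt (fst p - snd p) * \<psi> (fst p) (sqrt (fst p - snd p) * u))"
    by (auto intro!: continuous_intros simp: g_def case_prod_beta)
  from integral_continuous_on_param[OF this] show ?thesis by simp
qed

lemma has_real_derivative_integral_lower:
  fixes \<phi> G :: "real \<Rightarrow> real"
  assumes "l < s" "s < c" "c < \<tau>" "continuous_on {l..c} \<phi>"
    and G: "\<And>x. l < x \<Longrightarrow> x < c \<Longrightarrow> (\<phi> has_integral G x) {x..\<tau>}"
  shows "(G has_real_derivative - \<phi> s) (at s)"
proof -
  have G_eq: "G x = integral {x..c} \<phi> + integral {c..\<tau>} \<phi>" if "x \<in> {l<..<c}" for x
  proof -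
    have "(\<phi> has_integral G x) {x..\<tau>}" using G that by simp
    then show ?thesis
      using Henstock_Kurzweil_Integration.integral_combine[of x c \<tau> \<phi>] that assms(3)
      by (auto simp: integral_unique has_integral_integrable)
  qed
  have "((\<lambda>x. integral {x..c} \<phi>) has_real_derivative - \<phi> s) (at s within {l..c})"
    using integral_has_real_derivative'[OF assms(4), of s] assms by auto
  moreover have "at s within {l..c} = at s" using assms by (intro at_within_interior) auto
  ultimately have "((\<lambda>x. integral {x..c} \<phi> + integral {c..\<tau>} \<phi>) has_real_derivative - \<phi> s) (at s)"
    by (auto intro!: derivative_eq_intros)
  then show ?thesis
    by (rule has_field_derivative_transform_within_open[of _ _ _ "{l<..<c}"]) (use assms G_eq in auto)
qed

text \<open>By the mean value theorem the difference quotients at \<open>x\<close> are values of \<open>g\<close> near \<open>x\<close>.\<close>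
lemma has_real_derivative_of_punctured:
  fixes k g :: "real \<Rightarrow> real"
  assumes x: "l < x" "x < h"
    and cont_k: "continuous_on {l<..<h} k" and cont_g: "continuous_on {l<..<h} g"
    and deriv: "\<And>y. l < y \<Longrightarrow> y < h \<Longrightarrow> y \<noteq> x \<Longrightarrow> (k has_real_derivative g y) (at y)"
  shows "(k has_real_derivative g x) (at x)"
  unfolding has_field_derivative_iff
proof (rule tendstoI)
  fix e :: real assume "e > 0"
  have "isCont g x" using cont_g x continuous_on_eq_continuous_at[of "{l<..<h}" g] by auto
  then obtain d1 where d1: "d1 > 0" "\<And>y. dist y x < d1 \<Longrightarrow> dist (g y) (g x) < e"
    using \<open>e > 0\<close> unfolding continuous_at_eps_delta by blast
  define d where "d = min d1 (min (x - l) (h - x))"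
  have "dist ((k y - k x) / (y - x)) (g x) < e" if y: "y \<noteq> x" "dist y x < d" for y
  proof -
    define p q where "p = min x y" and "q = max x y"
    have pq: "p < q" "l < p" "q < h" using y x by (auto simp: p_def q_def d_def dist_real_def)
    have "\<And>z. p < z \<Longrightarrow> z < q \<Longrightarrow> (k has_real_derivative g z) (at z)"
      using deriv pq by (auto simp: p_def q_def)
    moreover have "continuous_on {p..q} k" by (rule continuous_on_subset[OF cont_k]) (use pq in auto)
    ultimately obtain z where z: "p < z" "z < q" "k q - k p = (q - p) * g z"
      using MVT[OF pq(1)] DERIV_unique by (metis real_differentiable_def)
    have "(k y - k x) / (y - x) = (k q - k p) / (q - p)"
      using y by (cases "x < y") (auto simp: p_def q_def divide_simps algebra_simps)
    moreover have "dist z x < d1"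
      using z y by (auto simp: p_def q_def d_def dist_real_def min_def max_def split: if_splits)
    ultimately show ?thesis using d1 z pq by simp
  qed
  moreover have "d > 0" using d1 x by (simp add: d_def)
  ultimately show "\<forall>\<^sub>F y in at x. dist ((k y - k x) / (y - x)) (g x) < e"
    unfolding eventually_at by blast
qed

lemma continuous_on_atLeast_right_limit:
  fixes f :: "real \<Rightarrow> real"
  assumes "continuous_on {0<..} f" and "(f \<longlongrightarrow> f 0) (at_right 0)"
  shows "continuous_on {0..} f"
  unfolding continuous_on_eq_continuous_within
proof
  fix x :: real assume x: "x \<in> {0..}"
  show "continuous (at x within {0..}) f"
  proof (cases "x = 0")
    case True then show ?thesis using assms(2) by (simp add: continuous_within at_within_Ici_at_right)
  next
    case False
    then have "isCont f x" using assms(1) x continuous_on_eq_continuous_at[of "{0<..}" f] by auto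
    then show ?thesis by (rule continuous_at_imp_continuous_within)
  qed
qed

text \<open>For \<open>(\<tau>, \<rho>)\<close> near \<open>(\<tau>\<^sub>0, \<rho>\<^sub>0)\<close> the values \<open>R \<tau> (s\<^sub>0 \<plusminus> e)\<close> still lie on either side of
  \<open>\<rho>\<close>, which traps \<open>t \<tau> \<rho>\<close> in \<open>(s\<^sub>0 - e, s\<^sub>0 + e)\<close>.\<close>
lemma continuous_on_implicit_decreasing:
  fixes R t :: "real \<Rightarrow> real \<Rightarrow> real" and D E :: "(real \<times> real) set"
  assumes E: "open E" "continuous_on E (\<lambda>p. R (fst p) (snd p))"
    and dec: "\<And>\<tau> s s'. (\<tau>, s) \<in> E \<Longrightarrow> (\<tau>, s') \<in> E \<Longrightarrow> s < s' \<Longrightarrow> R \<tau> s' < R \<tau> s"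
    and sol: "\<And>\<tau> \<rho>. (\<tau>, \<rho>) \<in> D \<Longrightarrow> (\<tau>, t \<tau> \<rho>) \<in> E \<and> R \<tau> (t \<tau> \<rho>) = \<rho>"
  shows "continuous_on D (\<lambda>p. t (fst p) (snd p))"
  unfolding continuous_on_def
proof (intro ballI tendstoI)
  fix p e assume "p \<in> D" "0 < (e::real)"
  obtain \<tau>\<^sub>0 \<rho>\<^sub>0 where p: "p = (\<tau>\<^sub>0, \<rho>\<^sub>0)" by fastforce
  define s\<^sub>0 where "s\<^sub>0 = t \<tau>\<^sub>0 \<rho>\<^sub>0"
  have s\<^sub>0: "(\<tau>\<^sub>0, s\<^sub>0) \<in> E" "R \<tau>\<^sub>0 s\<^sub>0 = \<rho>\<^sub>0" using sol \<open>p \<in> D\<close> by (auto simp: p s\<^sub>0_def)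
  obtain A B where AB: "open A" "open B" "(\<tau>\<^sub>0, s\<^sub>0) \<in> A \<times> B" "A \<times> B \<subseteq> E"
    by (rule open_prod_elim[OF E(1) s\<^sub>0(1)])
  then have "\<tau>\<^sub>0 \<in> A" "s\<^sub>0 \<in> B" by auto
  obtain r where "r > 0" "ball s\<^sub>0 r \<subseteq> B" using AB(2) \<open>s\<^sub>0 \<in> B\<close> open_contains_ball by blast
  define e' where "e' = min e (r / 2)"
  have e': "0 < e'" "e' \<le> e" and B: "s\<^sub>0 - e' \<in> B" "s\<^sub>0 + e' \<in> B"
    using \<open>0 < e\<close> \<open>r > 0\<close> \<open>ball s\<^sub>0 r \<subseteq> B\<close> by (auto simp: e'_def dist_real_def subset_iff)
  have lim: "((\<lambda>q. R (fst q) \<sigma> - snd q) \<longlongrightarrow> R \<tau>\<^sub>0 \<sigma> - \<rho>\<^sub>0) (at p within D)" if "\<sigma> \<in> B" for \<sigma>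
  proof -
    have "isCont (\<lambda>q. R (fst q) (snd q)) (\<tau>\<^sub>0, \<sigma>)"
      using that AB E continuous_on_eq_continuous_at by blast
    moreover have "((\<lambda>q. (fst q, \<sigma>)) \<longlongrightarrow> (\<tau>\<^sub>0, \<sigma>)) (at p within D)"
      by (auto intro!: tendsto_eq_intros simp: p)
    ultimately have "((\<lambda>q. R (fst q) \<sigma>) \<longlongrightarrow> R \<tau>\<^sub>0 \<sigma>) (at p within D)"
      using isCont_tendsto_compose[where g = "\<lambda>q. R (fst q) (snd q)"] by fastforce
    then show ?thesis by (auto intro!: tendsto_eq_intros simp: p)
  qed
  have "R \<tau>\<^sub>0 (s\<^sub>0 + e') < \<rho>\<^sub>0" "\<rho>\<^sub>0 < R \<tau>\<^sub>0 (s\<^sub>0 - e')"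
    using dec[of \<tau>\<^sub>0 s\<^sub>0 "s\<^sub>0 + e'"] dec[of \<tau>\<^sub>0 "s\<^sub>0 - e'" s\<^sub>0] AB B s\<^sub>0 e' by auto
  then have "\<forall>\<^sub>F q in at p within D. R (fst q) (s\<^sub>0 + e') - snd q < 0"
    "\<forall>\<^sub>F q in at p within D. 0 < R (fst q) (s\<^sub>0 - e') - snd q"
    using order_tendstoD(2)[OF lim[OF B(2)], of 0] order_tendstoD(1)[OF lim[OF B(1)], of 0] by simp_all
  moreover have "\<forall>\<^sub>F q in at p within D. fst q \<in> A"
    using topological_tendstoD[OF tendsto_fst[OF tendsto_ident_at[of p D]] AB(1)] \<open>\<tau>\<^sub>0 \<in> A\<close> by (simp add: p)
  moreover have "\<forall>\<^sub>F q in at p within D. q \<in> D"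
    by (simp add: eventually_at_filter)
  ultimately show "\<forall>\<^sub>F q in at p within D. dist (t (fst q) (snd q)) (t (fst p) (snd p)) < e"
  proof eventually_elim
    case (elim q)
    obtain \<tau> \<rho> where q: "q = (\<tau>, \<rho>)" by fastforce
    have lo: "(\<tau>, s\<^sub>0 - e') \<in> E" and hi: "(\<tau>, s\<^sub>0 + e') \<in> E" using elim AB B by (auto simp: q)
    have t: "(\<tau>, t \<tau> \<rho>) \<in> E" "R \<tau> (t \<tau> \<rho>) = \<rho>" using sol elim by (auto simp: q)
    have "s\<^sub>0 - e' < t \<tau> \<rho>" "t \<tau> \<rho> < s\<^sub>0 + e'"
      using dec[OF t(1) lo] dec[OF hi t(1)] t(2) elim by (fastforce simp: q not_less_iff_gr_or_eq)+
    then show ?case using e' by (simp add: q p s\<^sub>0_def dist_real_def)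
  qed
qed

lemma le_mult_deriv_if_convex_near_0:
  fixes a :: "real \<Rightarrow> real"
  assumes "a 0 = 0" and "continuous_on {0..} a"
    and d1: "\<And>t. 0 < t \<Longrightarrow> (a has_real_derivative deriv a t) (at t)"
    and d2: "\<And>t. 0 < t \<Longrightarrow> (deriv a has_real_derivative deriv (deriv a) t) (at t)"
    and convex: "\<And>t. 0 < t \<Longrightarrow> t < \<epsilon> \<Longrightarrow> deriv (deriv a) t \<ge> 0"
    and s: "0 < s" "s < \<epsilon>"
  shows "a s \<le> s * deriv a s"
proof -
  have "continuous_on {0..s} a" by (rule continuous_on_subset[OF assms(2)]) auto
  then obtain z where z: "0 < z" "z < s" "a s - a 0 = (s - 0) * deriv a z"
    using MVT2[of 0 s a "deriv a"] s MVT[OF s(1)] d1 DERIV_unique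
    by (metis real_differentiable_def)
  obtain w where w: "z < w" "w < s" "deriv a s - deriv a z = (s - z) * deriv (deriv a) w"
    using MVT2[of z s "deriv a" "deriv (deriv a)"] z d2 by force
  have "0 \<le> (s - z) * deriv (deriv a) w" using w z s convex[of w] by simp
  then have "deriv a z \<le> deriv a s" using w by simp
  then show ?thesis using z s \<open>a 0 = 0\<close> by (simp add: mult_left_mono)
qed

section \<open>Scale factors\<close>

text \<open>\<open>curvature_bound\<close> combines \<open>-K \<le> a\<ddot>a/\<dot>a\<^sup>2 \<le> 1\<close>, \<open>L\<close> is \<open>\<dot>a(0\<^sup>+)\<close>, and the alternative (i)/(ii) of
  the theorem enters only through \<open>a\<^sup>2/\<dot>a \<rightarrow> 0\<close>.\<close>
locale even_scale_factor =
  fixes a :: "real \<Rightarrow> real" and K L :: real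
  assumes a_0: "a 0 = 0"
    and strict_mono: "strict_mono_on {0..} a"
    and continuous: "continuous_on {0..} a"
    and even: "\<And>t. a (- t) = a t"
    and has_deriv: "\<And>t. 0 < t \<Longrightarrow> (a has_real_derivative deriv a t) (at t)"
    and has_deriv2: "\<And>t. 0 < t \<Longrightarrow> (deriv a has_real_derivative deriv (deriv a) t) (at t)"
    and continuous_deriv2: "continuous_on {0<..} (deriv (deriv a))"
    and deriv_pos: "\<And>t. 0 < t \<Longrightarrow> deriv a t > 0"
    and curvature_bound: "\<And>t. 0 < t \<Longrightarrow> \<bar>deriv (deriv a) t / (deriv a t)\<^sup>2\<bar> \<le> K / a t"
    and deriv_tendsto: "(deriv a \<longlongrightarrow> L) (at_right 0)"
    and sq_over_deriv_tendsto: "((\<lambda>s. (a s)\<^sup>2 / deriv a s) \<longlongrightarrow> 0) (at_right 0)"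
begin

lemma a_abs: "a \<bar>t\<bar> = a t"
  by (cases "t \<ge> 0") (simp_all add: even)

lemma a_less_a_iff: "a s < a t \<longleftrightarrow> \<bar>s\<bar> < \<bar>t\<bar>"
proof -
  have "a x < a y \<longleftrightarrow> x < y" if "0 \<le> x" "0 \<le> y" for x y
    using strict_mono that unfolding strict_mono_on_def by (metis atLeast_iff linorder_neqE order_less_asym)
  from this[of "\<bar>s\<bar>" "\<bar>t\<bar>"] show ?thesis by (simp add: a_abs)
qed

lemma a_pos: "t \<noteq> 0 \<Longrightarrow> a t > 0"
  using a_less_a_iff[of 0 t] a_0 by simp

lemma a_nonneg: "a t \<ge> 0"
  using a_pos[of t] a_0 by (cases "t = 0") auto

lemma continuous_on_a: "continuous_on S a"
proof -
  have "continuous_on UNIV (\<lambda>t. a \<bar>t\<bar>)"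
    by (rule continuous_on_compose2[OF continuous continuous_on_rabs[OF continuous_on_id]]) auto
  then show ?thesis by (simp add: a_abs continuous_on_subset[of UNIV])
qed

lemma isCont_a: "isCont a t"
  using continuous_on_a[of UNIV] by (simp add: continuous_on_eq_continuous_at)

lemma isCont_deriv: "0 < t \<Longrightarrow> isCont (deriv a) t"
  using has_deriv2 DERIV_isCont by blast

lemma isCont_deriv2: "0 < t \<Longrightarrow> isCont (deriv (deriv a)) t"
  using continuous_deriv2 by (simp add: continuous_on_eq_continuous_at)

lemma continuous_on_deriv: "continuous_on {0<..} (deriv a)"
  using isCont_deriv by (intro continuous_at_imp_continuous_on) auto

end

section \<open>Removing the singularity at \<open>t = \<tau>\<close>\<close>

text \<open>Substituting \<open>t = \<tau> - v\<^sup>2\<close> removes the square-root singularity of the integrands at \<open>t = \<tau>\<close>: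
  \<open>a(\<tau>)\<^sup>2 - a(\<tau> - v\<^sup>2)\<^sup>2 = sq_diff_quot a \<tau> v \<cdot> v\<^sup>2\<close> with \<open>sq_diff_quot\<close> continuous and positive.\<close>
definition diff_quot :: "(real \<Rightarrow> real) \<Rightarrow> real \<Rightarrow> real \<Rightarrow> real" where
  "diff_quot a \<tau> v = (if v = 0 then deriv a \<tau> else (a \<tau> - a (\<tau> - v\<^sup>2)) / v\<^sup>2)"

definition sq_diff_quot :: "(real \<Rightarrow> real) \<Rightarrow> real \<Rightarrow> real \<Rightarrow> real" where
  "sq_diff_quot a \<tau> v = (a \<tau> + a (\<tau> - v\<^sup>2)) * diff_quot a \<tau> v"

context even_scale_factor begin

lemma diff_quot_mean_value:
  assumes "v \<noteq> 0" "v\<^sup>2 < \<tau>"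
  obtains z where "\<tau> - v\<^sup>2 < z" "z < \<tau>" "diff_quot a \<tau> v = deriv a z"
proof -
  obtain z where "\<tau> - v\<^sup>2 < z" "z < \<tau>" "a \<tau> - a (\<tau> - v\<^sup>2) = (\<tau> - (\<tau> - v\<^sup>2)) * deriv a z"
    using MVT2[of "\<tau> - v\<^sup>2" \<tau> a "deriv a"] has_deriv assms by force
  with assms that show ?thesis by (simp add: diff_quot_def)
qed

lemma isCont_diff_quot_0:
  assumes "\<tau>\<^sub>0 > 0"
  shows "isCont (\<lambda>p. diff_quot a (fst p) (snd p)) (\<tau>\<^sub>0, 0)"
  unfolding continuous_at_eps_delta
proof (intro allI impI)
  fix e :: real assume "e > 0"
  obtain d where "d > 0" and d: "\<And>y. dist y \<tau>\<^sub>0 < d \<Longrightarrow> dist (deriv a y) (deriv a \<tau>\<^sub>0) < e"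
    using isCont_deriv[OF assms] \<open>e > 0\<close> unfolding continuous_at_eps_delta by blast
  define d' where "d' = min 1 (min (d / 2) (\<tau>\<^sub>0 / 4))"
  show "\<exists>d>0. \<forall>p. dist p (\<tau>\<^sub>0, 0) < d \<longrightarrow>
      dist (diff_quot a (fst p) (snd p)) (diff_quot a (fst (\<tau>\<^sub>0, 0::real)) (snd (\<tau>\<^sub>0, 0::real))) < e"
  proof (intro exI[of _ d'] conjI allI impI)
    show "d' > 0" using \<open>d > 0\<close> assms by (simp add: d'_def)
    fix p :: "real \<times> real" assume p: "dist p (\<tau>\<^sub>0, 0) < d'"
    obtain \<tau> v where pv: "p = (\<tau>, v)" by fastforce
    have \<tau>: "\<bar>\<tau> - \<tau>\<^sub>0\<bar> < d'" and v: "\<bar>v\<bar> < d'"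
      using dist_fst_le[of p "(\<tau>\<^sub>0, 0)"] dist_snd_le[of p "(\<tau>\<^sub>0, 0)"] p by (auto simp: pv dist_real_def)
    have "v\<^sup>2 = \<bar>v\<bar> * \<bar>v\<bar>" by (simp add: power2_eq_square abs_mult[symmetric])
    also have "\<dots> \<le> \<bar>v\<bar>" using v by (intro mult_left_le) (auto simp: d'_def)
    finally have "v\<^sup>2 < d'" using v by simp
    moreover have "d' \<le> d / 2" "d' \<le> \<tau>\<^sub>0 / 4" by (simp_all add: d'_def)
    ultimately have v2: "v\<^sup>2 < \<tau>" "\<bar>\<tau> - \<tau>\<^sub>0\<bar> < d / 2" "v\<^sup>2 < d / 2" using \<tau> by linarith+
    show "dist (diff_quot a (fst p) (snd p)) (diff_quot a (fst (\<tau>\<^sub>0, 0::real)) (snd (\<tau>\<^sub>0, 0::real))) < e"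
    proof (cases "v = 0")
      case True
      have "\<bar>\<tau> - \<tau>\<^sub>0\<bar> < d" using v2 by linarith
      then show ?thesis using d[of \<tau>] True by (simp add: pv diff_quot_def dist_real_def)
    next
      case False
      then obtain z where "\<tau> - v\<^sup>2 < z" "z < \<tau>" "diff_quot a \<tau> v = deriv a z"
        using v2(1) by (rule diff_quot_mean_value)
      moreover have "dist z \<tau>\<^sub>0 < d" using calculation v2 unfolding dist_real_def by linarith
      ultimately show ?thesis using d[of z] by (simp add: pv diff_quot_def)
    qed
  qed
qed

lemma continuous_on_diff_quot: "continuous_on {p. fst p > 0} (\<lambda>p. diff_quot a (fst p) (snd p))"
proof (rule continuous_at_imp_continuous_on, clarify)
  fix \<tau>\<^sub>0 v\<^sub>0 :: real assume "fst (\<tau>\<^sub>0, v\<^sub>0) > 0"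
  show "isCont (\<lambda>p. diff_quot a (fst p) (snd p)) (\<tau>\<^sub>0, v\<^sub>0)"
  proof (cases "v\<^sub>0 = 0")
    case True then show ?thesis using isCont_diff_quot_0 \<open>fst (\<tau>\<^sub>0, v\<^sub>0) > 0\<close> by simp
  next
    case False
    have "open {p :: real \<times> real. snd p \<noteq> 0}"
      by (rule open_Collect_neq) (auto intro: continuous_intros)
    then have "\<forall>\<^sub>F p in nhds (\<tau>\<^sub>0, v\<^sub>0). snd p \<noteq> 0"
      using eventually_nhds_in_open False by fastforce
    then have ev: "\<forall>\<^sub>F p in nhds (\<tau>\<^sub>0, v\<^sub>0). diff_quot a (fst p) (snd p) = (a (fst p) - a (fst p - (snd p)\<^sup>2)) / (snd p)\<^sup>2"
      by (rule eventually_mono) (simp add: diff_quot_def)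
    have "isCont (\<lambda>p. (a (fst p) - a (fst p - (snd p)\<^sup>2)) / (snd p)\<^sup>2) (\<tau>\<^sub>0, v\<^sub>0)"
      using False by (auto intro!: continuous_intros continuous_at_compose[unfolded o_def, OF _ isCont_a])
    then show ?thesis using isCont_cong[OF ev] by simp
  qed
qed

lemma continuous_on_sq_diff_quot: "continuous_on {p. fst p > 0} (\<lambda>p. sq_diff_quot a (fst p) (snd p))"
  unfolding sq_diff_quot_def
  by (intro continuous_intros continuous_on_diff_quot continuous_on_compose2[OF continuous_on_a]) auto

lemma isCont_sq_diff_quot:
  assumes "\<tau> > 0"
  shows "isCont (\<lambda>p. sq_diff_quot a (fst p) (snd p)) (\<tau>, v)"
proof -
  have "open {p :: real \<times> real. fst p > 0}" by (intro open_Collect_less continuous_intros)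
  with continuous_on_sq_diff_quot assms show ?thesis
    using continuous_on_eq_continuous_at by fastforce
qed

lemma sq_diff_quot_pos:
  assumes "\<tau> > 0" "v\<^sup>2 < 2 * \<tau>"
  shows "sq_diff_quot a \<tau> v > 0"
proof -
  have "diff_quot a \<tau> v > 0"
  proof (cases "v = 0")
    case True then show ?thesis using deriv_pos assms by (simp add: diff_quot_def)
  next
    case False
    have "a (\<tau> - v\<^sup>2) < a \<tau>" unfolding a_less_a_iff using assms False by (auto simp: abs_if)
    then show ?thesis using False by (simp add: diff_quot_def)
  qed
  then show ?thesis using a_pos[of \<tau>] a_nonneg[of "\<tau> - v\<^sup>2"] assms by (simp add: sq_diff_quot_def)
qed

lemma sq_diff_quot_mult: "v \<noteq> 0 \<Longrightarrow> sq_diff_quot a \<tau> v * v\<^sup>2 = (a \<tau>)\<^sup>2 - (a (\<tau> - v\<^sup>2))\<^sup>2"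
  by (simp add: sq_diff_quot_def diff_quot_def power2_eq_square square_diff_square_factored)

end

definition sqrt_gap :: "(real \<Rightarrow> real) \<Rightarrow> real \<Rightarrow> real \<Rightarrow> real" where
  "sqrt_gap a \<tau> t = sqrt ((a \<tau>)\<^sup>2 - (a t)\<^sup>2)"

definition eta :: "(real \<Rightarrow> real) \<Rightarrow> real \<Rightarrow> real \<Rightarrow> real" where
  "eta a \<tau> t = deriv (deriv a) t / (deriv a t)\<^sup>2 * (1 / sqrt_gap a \<tau> t - 1 / a \<tau>)"

text \<open>For \<open>0 < v\<close> these are \<open>2 v\<close> times the integrands \<open>a / sqrt_gap a \<tau>\<close> and \<open>eta a \<tau>\<close> at
  \<open>\<tau> - v\<^sup>2\<close>, written so that they stay continuous up to \<open>v = 0\<close>.\<close>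
definition rho_sub :: "(real \<Rightarrow> real) \<Rightarrow> real \<Rightarrow> real \<Rightarrow> real" where
  "rho_sub a \<tau> v = 2 * a (\<tau> - v\<^sup>2) / sqrt (sq_diff_quot a \<tau> v)"

definition eta_sub :: "(real \<Rightarrow> real) \<Rightarrow> real \<Rightarrow> real \<Rightarrow> real" where
  "eta_sub a \<tau> v = (if v\<^sup>2 < \<tau> then deriv (deriv a) (\<tau> - v\<^sup>2) / (deriv a (\<tau> - v\<^sup>2))\<^sup>2 *
      (2 / sqrt (sq_diff_quot a \<tau> v) - 2 * \<bar>v\<bar> / a \<tau>) else 0)"

context even_scale_factor begin

lemma sqrt_gap_pos: "\<bar>t\<bar> < \<tau> \<Longrightarrow> sqrt_gap a \<tau> t > 0"
  using a_less_a_iff[of t \<tau>] a_nonneg[of t] by (simp add: sqrt_gap_def power_strict_mono)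

lemma sqrt_gap_0: "\<tau> \<noteq> 0 \<Longrightarrow> sqrt_gap a \<tau> 0 = a \<tau>"
  using a_pos[of \<tau>] by (simp add: sqrt_gap_def a_0)

lemma sqrt_gap_abs: "sqrt_gap a \<tau> \<bar>t\<bar> = sqrt_gap a \<tau> t"
  by (simp add: sqrt_gap_def a_abs)

lemma sqrt_gap_squared: "\<bar>t\<bar> \<le> \<bar>\<tau>\<bar> \<Longrightarrow> (sqrt_gap a \<tau> t)\<^sup>2 = (a \<tau>)\<^sup>2 - (a t)\<^sup>2"
  using a_less_a_iff[of \<tau> t] a_nonneg[of t] power_mono[of "a t" "a \<tau>" 2]
  by (simp add: sqrt_gap_def not_less)

lemma sqrt_gap_sub:
  assumes "v \<noteq> 0"
  shows "sqrt_gap a \<tau> (\<tau> - v\<^sup>2) = sqrt (sq_diff_quot a \<tau> v) * \<bar>v\<bar>"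
proof -
  have "sqrt_gap a \<tau> (\<tau> - v\<^sup>2) = sqrt (sq_diff_quot a \<tau> v * v\<^sup>2)"
    using sq_diff_quot_mult[OF assms] by (simp add: sqrt_gap_def)
  then show ?thesis by (simp add: real_sqrt_mult)
qed

lemma continuous_on_sqrt_gap: "continuous_on S (\<lambda>p. sqrt_gap a (fst p) (snd p))"
  unfolding sqrt_gap_def by (intro continuous_intros continuous_on_compose2[OF continuous_on_a]) auto

lemma continuous_on_sqrt_gap_right: "continuous_on S (sqrt_gap a \<tau>)"
  unfolding sqrt_gap_def by (intro continuous_intros continuous_on_a)

lemma continuous_on_rho_sub:
  "continuous_on {p. fst p > 0 \<and> (snd p)\<^sup>2 < 2 * fst p} (\<lambda>p. rho_sub a (fst p) (snd p))"
  unfolding rho_sub_def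
proof (intro continuous_intros continuous_on_compose2[OF continuous_on_a])
  show "continuous_on {p. 0 < fst p \<and> (snd p)\<^sup>2 < 2 * fst p} (\<lambda>p. sq_diff_quot a (fst p) (snd p))"
    by (rule continuous_on_subset[OF continuous_on_sq_diff_quot]) auto
  show "\<forall>p\<in>{p. 0 < fst p \<and> (snd p)\<^sup>2 < 2 * fst p}. sqrt (sq_diff_quot a (fst p) (snd p)) \<noteq> 0"
    using sq_diff_quot_pos by force
qed auto

lemma rho_sub_eq:
  assumes "0 < v" "v\<^sup>2 < 2 * \<tau>"
  shows "rho_sub a \<tau> v = 2 * v * (a (\<tau> - v\<^sup>2) / sqrt_gap a \<tau> (\<tau> - v\<^sup>2))"
  using sqrt_gap_sub[of v \<tau>] sq_diff_quot_pos[of \<tau> v] assms by (simp add: rho_sub_def)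

lemma eta_sub_eq:
  assumes "0 < v" "v\<^sup>2 < \<tau>"
  shows "eta_sub a \<tau> v = 2 * v * eta a \<tau> (\<tau> - v\<^sup>2)"
  using sqrt_gap_sub[of v \<tau>] sq_diff_quot_pos[of \<tau> v] a_pos[of \<tau>] assms
  by (simp add: eta_sub_def eta_def field_simps)

text \<open>Near \<open>v\<^sup>2 = \<tau>\<close> the factor \<open>2 / sqrt (sq_diff_quot) - 2\<bar>v\<bar>/a \<tau>\<close> is of order \<open>a(\<tau> - v\<^sup>2)\<^sup>2\<close>,
  which beats the bound \<open>K / a\<close> on \<open>\<ddot>a/\<dot>a\<^sup>2\<close>.\<close>
lemma eta_sub_bound:
  assumes "\<tau> > 0" "v \<noteq> 0" "v\<^sup>2 < \<tau>"
  defines "P \<equiv> sqrt_gap a \<tau> (\<tau> - v\<^sup>2)"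
  shows "\<bar>eta_sub a \<tau> v\<bar> \<le> 2 * K * \<bar>v\<bar> * a (\<tau> - v\<^sup>2) / (P * a \<tau> * (a \<tau> + P))"
proof -
  define t where "t = \<tau> - v\<^sup>2"
  define c where "c = deriv (deriv a) t / (deriv a t)\<^sup>2"
  have t: "0 < t" "t < \<tau>" using assms by (auto simp: t_def)
  have at: "a t > 0" and aT: "a \<tau> > 0" using a_pos t by auto
  have Q: "sq_diff_quot a \<tau> v > 0" using sq_diff_quot_pos assms by simp
  have P: "P = sqrt (sq_diff_quot a \<tau> v) * \<bar>v\<bar>" using sqrt_gap_sub assms by (simp add: P_def)
  have P_pos: "P > 0" using P Q assms by simp
  have P2: "P\<^sup>2 = (a \<tau>)\<^sup>2 - (a t)\<^sup>2" using sqrt_gap_squared[of t \<tau>] t by (simp add: P_def t_def)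
  have "2 / sqrt (sq_diff_quot a \<tau> v) - 2 * \<bar>v\<bar> / a \<tau> = 2 * \<bar>v\<bar> * (a \<tau> - P) / (P * a \<tau>)"
    using P P_pos aT Q assms by (simp add: field_simps)
  also have "a \<tau> - P = (a t)\<^sup>2 / (a \<tau> + P)"
    using P2 P_pos aT by (simp add: field_simps power2_eq_square)
  finally have "eta_sub a \<tau> v = c * (2 * \<bar>v\<bar> * (a t)\<^sup>2 / (P * a \<tau> * (a \<tau> + P)))"
    using assms by (simp add: eta_sub_def c_def t_def[symmetric])
  then have "\<bar>eta_sub a \<tau> v\<bar> = \<bar>c\<bar> * (2 * \<bar>v\<bar> * (a t)\<^sup>2 / (P * a \<tau> * (a \<tau> + P)))"
    using P_pos aT by (simp add: abs_mult)
  also have "\<dots> \<le> K / a t * (2 * \<bar>v\<bar> * (a t)\<^sup>2 / (P * a \<tau> * (a \<tau> + P)))"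
    using P_pos aT curvature_bound[OF t(1)] by (intro mult_right_mono) (auto simp: c_def)
  also have "\<dots> = 2 * K * \<bar>v\<bar> * a t / (P * a \<tau> * (a \<tau> + P))"
    using at by (simp add: field_simps power2_eq_square)
  finally show ?thesis by (simp add: t_def)
qed

lemma eta_sub_tendsto_0:
  assumes "\<tau>\<^sub>0 > 0" "v\<^sub>0\<^sup>2 = \<tau>\<^sub>0"
  shows "((\<lambda>p. eta_sub a (fst p) (snd p)) \<longlongrightarrow> 0) (at (\<tau>\<^sub>0, v\<^sub>0))"
proof -
  define P where "P p = sqrt_gap a (fst p) (fst p - (snd p)\<^sup>2)" for p :: "real \<times> real"
  define B where "B p = 2 * K * \<bar>snd p\<bar> * a (fst p - (snd p)\<^sup>2) / (P p * a (fst p) * (a (fst p) + P p))"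
    for p :: "real \<times> real"
  have aT: "a \<tau>\<^sub>0 > 0" using a_pos assms by simp
  have "isCont B (\<tau>\<^sub>0, v\<^sub>0)"
    unfolding B_def P_def sqrt_gap_def
    using assms aT by (auto intro!: continuous_intros continuous_at_compose[unfolded o_def, OF _ isCont_a]
        simp: a_0)
  then have B: "(B \<longlongrightarrow> 0) (at (\<tau>\<^sub>0, v\<^sub>0))"
    using assms by (simp add: isCont_def B_def a_0)
  have "open {p :: real \<times> real. 0 < fst p \<and> snd p \<noteq> 0}"
    by (intro open_Collect_conj open_Collect_less open_Collect_neq continuous_intros)
  moreover have "(\<tau>\<^sub>0, v\<^sub>0) \<in> {p. 0 < fst p \<and> snd p \<noteq> 0}" using assms by auto
  ultimately have "\<forall>\<^sub>F p in at (\<tau>\<^sub>0, v\<^sub>0). 0 < fst p \<and> snd p \<noteq> 0"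
    by (rule eventually_mono[OF eventually_at_in_open]) auto
  then have "\<forall>\<^sub>F p in at (\<tau>\<^sub>0, v\<^sub>0). norm (eta_sub a (fst p) (snd p)) \<le> \<bar>B p\<bar>"
  proof eventually_elim
    case (elim p)
    show ?case
    proof (cases "(snd p)\<^sup>2 < fst p")
      case True
      then have "\<bar>eta_sub a (fst p) (snd p)\<bar> \<le> B p"
        using eta_sub_bound[of "fst p" "snd p"] elim unfolding B_def P_def by blast
      then show ?thesis by simp
    qed (simp add: eta_sub_def)
  qed
  from Lim_null_comparison[OF this] show ?thesis using tendsto_rabs[OF B] by simp
qed

lemma isCont_eta_sub_inside:
  assumes "v\<^sub>0\<^sup>2 < \<tau>\<^sub>0"
  shows "isCont (\<lambda>p. eta_sub a (fst p) (snd p)) (\<tau>\<^sub>0, v\<^sub>0)"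
proof -
  have "open {p :: real \<times> real. (snd p)\<^sup>2 < fst p}" by (intro open_Collect_less continuous_intros)
  then have "\<forall>\<^sub>F p in nhds (\<tau>\<^sub>0, v\<^sub>0). (snd p)\<^sup>2 < fst p"
    using eventually_nhds_in_open assms by fastforce
  then have ev: "\<forall>\<^sub>F p in nhds (\<tau>\<^sub>0, v\<^sub>0). eta_sub a (fst p) (snd p) =
      deriv (deriv a) (fst p - (snd p)\<^sup>2) / (deriv a (fst p - (snd p)\<^sup>2))\<^sup>2 *
      (2 / sqrt (sq_diff_quot a (fst p) (snd p)) - 2 * \<bar>snd p\<bar> / a (fst p))"
    by (rule eventually_mono) (simp add: eta_sub_def)
  have comp: "isCont (\<lambda>p. h (fst p - (snd p)\<^sup>2)) (\<tau>\<^sub>0, v\<^sub>0)" if "isCont h (\<tau>\<^sub>0 - v\<^sub>0\<^sup>2)" for h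
    using isCont_o2[where f = "\<lambda>p. fst p - (snd p)\<^sup>2" and a = "(\<tau>\<^sub>0, v\<^sub>0)" and g = h] that
    by (simp add: continuous_intros)
  have t: "\<tau>\<^sub>0 - v\<^sub>0\<^sup>2 > 0" and "\<tau>\<^sub>0 > 0"
    using assms by (auto intro: le_less_trans[OF zero_le_power2])
  have "isCont (\<lambda>p. deriv (deriv a) (fst p - (snd p)\<^sup>2)) (\<tau>\<^sub>0, v\<^sub>0)"
    "isCont (\<lambda>p. deriv a (fst p - (snd p)\<^sup>2)) (\<tau>\<^sub>0, v\<^sub>0)"
    "deriv a (\<tau>\<^sub>0 - v\<^sub>0\<^sup>2) \<noteq> 0"
    using comp[OF isCont_deriv2[OF t]] comp[OF isCont_deriv[OF t]] deriv_pos[OF t] by auto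
  moreover have "isCont (\<lambda>p. a (fst p)) (\<tau>\<^sub>0, v\<^sub>0)"
    by (rule continuous_at_compose[unfolded o_def, OF _ isCont_a]) (intro continuous_intros)
  moreover have "sqrt (sq_diff_quot a \<tau>\<^sub>0 v\<^sub>0) \<noteq> 0" "a \<tau>\<^sub>0 \<noteq> 0"
    using \<open>\<tau>\<^sub>0 > 0\<close> sq_diff_quot_pos[of \<tau>\<^sub>0 v\<^sub>0] a_pos[of \<tau>\<^sub>0] assms by auto
  ultimately have "isCont (\<lambda>p. deriv (deriv a) (fst p - (snd p)\<^sup>2) / (deriv a (fst p - (snd p)\<^sup>2))\<^sup>2 *
      (2 / sqrt (sq_diff_quot a (fst p) (snd p)) - 2 * \<bar>snd p\<bar> / a (fst p))) (\<tau>\<^sub>0, v\<^sub>0)"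
    using \<open>\<tau>\<^sub>0 > 0\<close> by (intro continuous_intros isCont_sq_diff_quot) auto
  then show ?thesis using isCont_cong[OF ev] by simp
qed

lemma continuous_on_eta_sub: "continuous_on {p. fst p > 0} (\<lambda>p. eta_sub a (fst p) (snd p))"
proof (rule continuous_at_imp_continuous_on, clarify)
  fix \<tau>\<^sub>0 v\<^sub>0 :: real assume "fst (\<tau>\<^sub>0, v\<^sub>0) > 0"
  then have "\<tau>\<^sub>0 > 0" by simp
  consider "v\<^sub>0\<^sup>2 < \<tau>\<^sub>0" | "v\<^sub>0\<^sup>2 > \<tau>\<^sub>0" | "v\<^sub>0\<^sup>2 = \<tau>\<^sub>0" by linarith
  then show "isCont (\<lambda>p. eta_sub a (fst p) (snd p)) (\<tau>\<^sub>0, v\<^sub>0)"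
  proof cases
    case 2
    have "open {p :: real \<times> real. fst p < (snd p)\<^sup>2}" by (intro open_Collect_less continuous_intros)
    then have "\<forall>\<^sub>F p in nhds (\<tau>\<^sub>0, v\<^sub>0). fst p < (snd p)\<^sup>2"
      using eventually_nhds_in_open 2 by fastforce
    then have "\<forall>\<^sub>F p in nhds (\<tau>\<^sub>0, v\<^sub>0). eta_sub a (fst p) (snd p) = 0"
      by (rule eventually_mono) (simp add: eta_sub_def)
    then show ?thesis using isCont_cong by force
  next
    case 3
    then show ?thesis
      using eta_sub_tendsto_0[OF \<open>\<tau>\<^sub>0 > 0\<close>] by (simp add: isCont_def eta_sub_def)
  qed (rule isCont_eta_sub_inside)
qed

end

section \<open>The integral \<open>\<rho>\<close> and its inverse \<open>t0\<close>\<close>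

definition wedge :: "(real \<times> real) set" where
  "wedge = {p. 0 < fst p \<and> - fst p < snd p \<and> snd p < fst p}"

definition rho_int :: "(real \<Rightarrow> real) \<Rightarrow> real \<Rightarrow> real \<Rightarrow> real" where
  "rho_int a \<tau> s = integral {0..1} (\<lambda>u. sqrt (\<tau> - s) * rho_sub a \<tau> (sqrt (\<tau> - s) * u))"

definition eta_int :: "(real \<Rightarrow> real) \<Rightarrow> real \<Rightarrow> real \<Rightarrow> real" where
  "eta_int a \<tau> s = integral {0..1} (\<lambda>u. sqrt (\<tau> - s) * eta_sub a \<tau> (sqrt (\<tau> - s) * u))"

context even_scale_factor begin

lemma has_integral_rho_int:
  assumes "- \<tau> < s" "s < \<tau>"
  shows "((\<lambda>t. a t / sqrt_gap a \<tau> t) has_integral rho_int a \<tau> s) {s..\<tau>}"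
  unfolding rho_int_def
proof (rule has_integral_sqrt_substitution_unit)
  have "v\<^sup>2 < 2 * \<tau>" if "v \<in> {0..sqrt (\<tau> - s)}" for v
    using power_mono[of v "sqrt (\<tau> - s)" 2] that assms by auto
  then show "continuous_on {0..sqrt (\<tau> - s)} (rho_sub a \<tau>)"
    using assms by (intro continuous_on_compose2[OF continuous_on_rho_sub, of _ "Pair \<tau>", simplified])
      (auto intro!: continuous_intros)
  fix v assume "0 < v" "v < sqrt (\<tau> - s)"
  then have "v\<^sup>2 < 2 * \<tau>" using power_strict_mono[of v "sqrt (\<tau> - s)" 2] assms by simp
  then show "rho_sub a \<tau> v = 2 * v * (a (\<tau> - v\<^sup>2) / sqrt_gap a \<tau> (\<tau> - v\<^sup>2))"
    using rho_sub_eq \<open>0 < v\<close> by blast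
qed fact

lemma has_integral_eta_int:
  assumes "0 \<le> s" "s < \<tau>"
  shows "(eta a \<tau> has_integral eta_int a \<tau> s) {s..\<tau>}"
  unfolding eta_int_def
proof (rule has_integral_sqrt_substitution_unit)
  show "continuous_on {0..sqrt (\<tau> - s)} (eta_sub a \<tau>)"
    using assms by (intro continuous_on_compose2[OF continuous_on_eta_sub, of _ "Pair \<tau>", simplified])
      (auto intro!: continuous_intros)
  fix v assume "0 < v" "v < sqrt (\<tau> - s)"
  then have "v\<^sup>2 < \<tau>" using power_strict_mono[of v "sqrt (\<tau> - s)" 2] assms by simp
  then show "eta_sub a \<tau> v = 2 * v * eta a \<tau> (\<tau> - v\<^sup>2)"
    using eta_sub_eq \<open>0 < v\<close> by blast
qed fact

lemma continuous_on_rho_int: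
  "continuous_on {p. fst p > 0 \<and> - fst p < snd p \<and> snd p \<le> fst p} (\<lambda>p. rho_int a (fst p) (snd p))"
  unfolding rho_int_def
proof (rule continuous_on_integral_unit_param[OF continuous_on_rho_sub])
  fix \<tau> s u :: real assume "(\<tau>, s) \<in> {p. 0 < fst p \<and> - fst p < snd p \<and> snd p \<le> fst p}" "0 \<le> u" "u \<le> 1"
  moreover from this have "(sqrt (\<tau> - s) * u)\<^sup>2 \<le> \<tau> - s"
    using mult_left_le[of "u\<^sup>2" "\<tau> - s"] by (simp add: power_mult_distrib power_le_one)
  ultimately show "(\<tau>, sqrt (\<tau> - s) * u) \<in> {p. 0 < fst p \<and> (snd p)\<^sup>2 < 2 * fst p}" by simp
qed

lemma continuous_on_eta_int: "continuous_on {p. fst p > 0 \<and> snd p \<le> fst p} (\<lambda>p. eta_int a (fst p) (snd p))"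
  unfolding eta_int_def by (rule continuous_on_integral_unit_param[OF continuous_on_eta_sub]) auto

lemma rho_int_eq_integral:
  "- \<tau> < s \<Longrightarrow> s < \<tau> \<Longrightarrow>
     rho_int a \<tau> s = integral {s..\<tau>} (\<lambda>t. a t / sqrt ((a \<tau>)\<^sup>2 - (a t)\<^sup>2))"
  using integral_unique[OF has_integral_rho_int[of \<tau> s]] by (simp add: sqrt_gap_def)

lemma has_real_derivative_rho_int:
  assumes "- \<tau> < s" "s < \<tau>"
  shows "(rho_int a \<tau> has_real_derivative - (a s / sqrt_gap a \<tau> s)) (at s)"
proof (rule has_real_derivative_integral_lower[of "(s - \<tau>) / 2" s "(s + \<tau>) / 2" \<tau>])
  have pos: "sqrt_gap a \<tau> x > 0" if "x \<in> {(s - \<tau>) / 2..(s + \<tau>) / 2}" for x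
    using that assms by (intro sqrt_gap_pos) auto
  then show "continuous_on {(s - \<tau>) / 2..(s + \<tau>) / 2} (\<lambda>t. a t / sqrt_gap a \<tau> t)"
    by (intro continuous_on_divide continuous_on_a continuous_on_sqrt_gap_right) (use pos in force)
qed (use assms has_integral_rho_int in auto)

lemma rho_int_strict_decreasing:
  assumes "- \<tau> < s" "s < s'" "s' < \<tau>"
  shows "rho_int a \<tau> s' < rho_int a \<tau> s"
proof -
  have dec: "rho_int a \<tau> y < rho_int a \<tau> x" if "- \<tau> < x" "x < y" "y < \<tau>" "0 \<le> x \<or> y \<le> 0" for x y
  proof (rule DERIV_neg_imp_decreasing_open[OF \<open>x < y\<close>])
    fix z assume "x < z" "z < y"
    then have "z \<noteq> 0" "\<bar>z\<bar> < \<tau>" using that by auto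
    then show "\<exists>D. (rho_int a \<tau> has_real_derivative D) (at z) \<and> D < 0"
      using has_real_derivative_rho_int[of \<tau> z] a_pos sqrt_gap_pos by force
  next
    show "continuous_on {x..y} (rho_int a \<tau>)"
    proof (intro DERIV_atLeastAtMost_imp_continuous_on)
      fix z assume "x \<le> z" "z \<le> y"
      then show "\<exists>D. (rho_int a \<tau> has_real_derivative D) (at z)"
        using has_real_derivative_rho_int[of \<tau> z] that by auto
    qed
  qed
  show ?thesis
  proof (cases "0 \<le> s \<or> s' \<le> 0")
    case True then show ?thesis using dec assms by simp
  next
    case False
    then have "rho_int a \<tau> s' < rho_int a \<tau> 0" "rho_int a \<tau> 0 < rho_int a \<tau> s" using dec assms by auto
    then show ?thesis by simp
  qed
qed

text \<open>The integrand is even, so \<open>\<integral>\<^bsub>-s\<^esub>\<^sup>\<tau> = 2 \<integral>\<^sub>0\<^sup>s + \<integral>\<^sub>s\<^sup>\<tau>\<close>.\<close>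
lemma rho_int_minus:
  assumes "0 \<le> s" "s < \<tau>"
  shows "rho_int a \<tau> (- s) = 2 * rho_int a \<tau> 0 - rho_int a \<tau> s"
proof -
  define \<phi> where "\<phi> = (\<lambda>t. a t / sqrt_gap a \<tau> t)"
  have R: "rho_int a \<tau> x = integral {x..\<tau>} \<phi>" if "- \<tau> < x" "x < \<tau>" for x
    using integral_unique[OF has_integral_rho_int[of \<tau> x]] that by (simp add: \<phi>_def)
  have int: "\<phi> integrable_on {-s..\<tau>}" using has_integral_rho_int[of \<tau> "-s"] assms by (auto simp: \<phi>_def)
  then have int0: "\<phi> integrable_on {0..\<tau>}" by (rule integrable_subinterval_real) (use assms in auto)
  have "integral {-s..\<tau>} \<phi> = integral {-s..0} \<phi> + integral {0..\<tau>} \<phi>"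
    using Henstock_Kurzweil_Integration.integral_combine[OF _ _ int, of 0] assms by simp
  also have "integral {-s..0} \<phi> = integral {0..s} \<phi>"
    using Henstock_Kurzweil_Integration.integral_reflect_real[of s 0 \<phi>] by (simp add: \<phi>_def sqrt_gap_def even)
  also have split: "integral {0..\<tau>} \<phi> = integral {0..s} \<phi> + integral {s..\<tau>} \<phi>"
    using Henstock_Kurzweil_Integration.integral_combine[OF _ _ int0, of s] assms by simp
  finally show ?thesis using R[of "- s"] R[of 0] R[of s] split assms by simp
qed

lemma rho_int_surj:
  assumes "\<tau> > 0" "0 < \<rho>" "\<rho> < 2 * rho_int a \<tau> 0"
  obtains s where "- \<tau> < s" "s < \<tau>" "rho_int a \<tau> s = \<rho>"
proof -
  have half: "\<exists>s. 0 \<le> s \<and> s < \<tau> \<and> rho_int a \<tau> s = r" if "0 < r" "r \<le> rho_int a \<tau> 0" for r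
  proof -
    have "continuous_on {0..\<tau>} (rho_int a \<tau>)"
      using assms(1) by (intro continuous_on_compose2[OF continuous_on_rho_int, of _ "Pair \<tau>", simplified])
        (auto intro!: continuous_intros)
    moreover have "rho_int a \<tau> \<tau> = 0" by (simp add: rho_int_def)
    ultimately have "\<exists>s\<ge>0. s \<le> \<tau> \<and> rho_int a \<tau> s = r"
      using IVT2'[of "rho_int a \<tau>" \<tau> r 0] that assms(1) by simp
    then obtain s where "0 \<le> s" "s \<le> \<tau>" "rho_int a \<tau> s = r" by blast
    moreover have "s \<noteq> \<tau>" using calculation that by (auto simp: rho_int_def)
    ultimately show ?thesis by auto
  qed
  show ?thesis
  proof (cases "\<rho> \<le> rho_int a \<tau> 0")
    case True
    then show ?thesis using half[of \<rho>] assms that by force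
  next
    case False
    then obtain s where "0 \<le> s" "s < \<tau>" "rho_int a \<tau> s = 2 * rho_int a \<tau> 0 - \<rho>"
      using half[of "2 * rho_int a \<tau> 0 - \<rho>"] assms by auto
    then show ?thesis using rho_int_minus[of s \<tau>] that[of "- s"] by simp
  qed
qed

lemma domD_iff: "(\<tau>, \<rho>) \<in> domD a \<longleftrightarrow> \<tau> > 0 \<and> 0 < \<rho> \<and> \<rho> < 2 * rho_int a \<tau> 0"
  using rho_int_eq_integral[of _ 0] by (auto simp: domD_def rhoM_def)

lemma t0_rho_int:
  assumes "(\<tau>, \<rho>) \<in> domD a"
  shows "- \<tau> < t0 a \<tau> \<rho>" "t0 a \<tau> \<rho> < \<tau>" "rho_int a \<tau> (t0 a \<tau> \<rho>) = \<rho>"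
proof -
  have \<tau>: "\<tau> > 0" "0 < \<rho>" "\<rho> < 2 * rho_int a \<tau> 0" using assms domD_iff by auto
  then obtain s where s: "- \<tau> < s" "s < \<tau>" "rho_int a \<tau> s = \<rho>" by (rule rho_int_surj)
  have "\<exists>!s. - \<tau> < s \<and> s < \<tau> \<and> \<rho> = integral {s..\<tau>} (\<lambda>t. a t / sqrt ((a \<tau>)\<^sup>2 - (a t)\<^sup>2))"
  proof (rule ex1I[of _ s])
    fix y assume "- \<tau> < y \<and> y < \<tau> \<and> \<rho> = integral {y..\<tau>} (\<lambda>t. a t / sqrt ((a \<tau>)\<^sup>2 - (a t)\<^sup>2))"
    then show "y = s"
      using rho_int_eq_integral[of \<tau> y] rho_int_strict_decreasing[of \<tau> y s] rho_int_strict_decreasing[of \<tau> s y]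
        s \<tau> by (cases y s rule: linorder_cases) auto
  qed (use s rho_int_eq_integral \<tau> in auto)
  from theI'[OF this] show "- \<tau> < t0 a \<tau> \<rho>" "t0 a \<tau> \<rho> < \<tau>" "rho_int a \<tau> (t0 a \<tau> \<rho>) = \<rho>"
    using rho_int_eq_integral \<tau> unfolding t0_def by auto
qed

lemma continuous_on_t0: "continuous_on (domD a) (\<lambda>p. t0 a (fst p) (snd p))"
proof (rule continuous_on_implicit_decreasing)
  show "open wedge"
    unfolding wedge_def by (intro open_Collect_conj open_Collect_less continuous_intros)
  show "continuous_on wedge (\<lambda>p. rho_int a (fst p) (snd p))"
    by (rule continuous_on_subset[OF continuous_on_rho_int]) (auto simp: wedge_def)
qed (use rho_int_strict_decreasing t0_rho_int domD_iff in \<open>auto simp: wedge_def\<close>)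

end

section \<open>The function \<open>f\<close>\<close>

definition sq_over_deriv :: "(real \<Rightarrow> real) \<Rightarrow> real \<Rightarrow> real" where
  "sq_over_deriv a s = (if s > 0 then (a s)\<^sup>2 / deriv a s else 0)"

definition deriv_ext :: "(real \<Rightarrow> real) \<Rightarrow> real \<Rightarrow> real \<Rightarrow> real" where
  "deriv_ext a L s = (if s > 0 then deriv a s else L)"

text \<open>Closed form of \<open>fpos a \<tau> s\<close> for \<open>0 \<le> s < \<tau>\<close> that is visibly continuous up to \<open>s = 0\<close>: the
  divergent part \<open>1 / \<dot>a(s)\<close> of \<open>\<integral>\<^sub>s\<^sup>\<tau> \<ddot>a/\<dot>a\<^sup>2\<close> only appears multiplied by
  \<open>sqrt_gap a \<tau> s / a \<tau> - 1 = - a(s)\<^sup>2 / (a \<tau> (sqrt_gap a \<tau> s + a \<tau>))\<close>.\<close>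
definition fpos_closed :: "(real \<Rightarrow> real) \<Rightarrow> real \<Rightarrow> real \<Rightarrow> real" where
  "fpos_closed a \<tau> s = sqrt_gap a \<tau> s * eta_int a \<tau> s
     - sq_over_deriv a s / (a \<tau> * (sqrt_gap a \<tau> s + a \<tau>)) - (sqrt_gap a \<tau> s / a \<tau> - 1) / deriv a \<tau>"

text \<open>The value of \<open>\<partial>\<^sub>\<rho> ff a \<tau> (t0 a \<tau> \<rho>)\<close> in terms of \<open>s = \<bar>t0 a \<tau> \<rho>\<bar>\<close>.\<close>
definition ff_rho_deriv :: "(real \<Rightarrow> real) \<Rightarrow> real \<Rightarrow> real \<Rightarrow> real \<Rightarrow> real" where
  "ff_rho_deriv a L \<tau> s = (1 - deriv_ext a L s / deriv a \<tau>) / a \<tau> + deriv_ext a L s * eta_int a \<tau> s"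

definition fpos_deriv :: "(real \<Rightarrow> real) \<Rightarrow> real \<Rightarrow> real \<Rightarrow> real" where
  "fpos_deriv a \<tau> s = - (a s * deriv a s / sqrt_gap a \<tau> s) *
     (eta_int a \<tau> s + (1 / deriv a s - 1 / deriv a \<tau>) / a \<tau>)"

definition half_wedge :: "(real \<times> real) set" where
  "half_wedge = {p. 0 < fst p \<and> 0 \<le> snd p \<and> snd p < fst p}"

context even_scale_factor begin

lemma has_integral_curvature:
  assumes "0 < s" "s < \<tau>"
  shows "((\<lambda>t. deriv (deriv a) t / (deriv a t)\<^sup>2) has_integral (1 / deriv a s - 1 / deriv a \<tau>)) {s..\<tau>}"
proof -
  have "((\<lambda>t. deriv (deriv a) t / (deriv a t)\<^sup>2) has_integral
      (- inverse (deriv a \<tau>) - - inverse (deriv a s))) {s..\<tau>}"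
  proof (rule fundamental_theorem_of_calculus_interior)
    have "\<forall>x\<in>{s..\<tau>}. isCont (deriv a) x \<and> deriv a x \<noteq> 0"
      using assms deriv_pos isCont_deriv by (metis atLeastAtMost_iff less_le_trans order_less_irrefl)
    then show "continuous_on {s..\<tau>} (\<lambda>t. - inverse (deriv a t))"
      by (intro continuous_intros continuous_at_imp_continuous_on) auto
    fix x assume "x \<in> {s<..<\<tau>}"
    then have "x > 0" using assms by simp
    have "((\<lambda>t. inverse (deriv a t)) has_real_derivative
        - (deriv (deriv a) x * inverse (deriv a x ^ Suc (Suc 0)))) (at x)"
      using DERIV_inverse_fun[OF has_deriv2[OF \<open>x > 0\<close>]] deriv_pos[OF \<open>x > 0\<close>] by simp
    from DERIV_minus[OF this]
    show "((\<lambda>t. - inverse (deriv a t)) has_vector_derivative deriv (deriv a) x / (deriv a x)\<^sup>2) (at x)"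
      by (simp add: has_real_derivative_iff_has_vector_derivative divide_inverse power2_eq_square)
  qed (use assms in simp)
  then show ?thesis by (simp add: divide_inverse)
qed

lemma fpos_integrand_split:
  "deriv (deriv a) t / (deriv a t)\<^sup>2 * (sqrt_gap a \<tau> s / sqrt_gap a \<tau> t - 1)
    = sqrt_gap a \<tau> s * eta a \<tau> t + (sqrt_gap a \<tau> s / a \<tau> - 1) * (deriv (deriv a) t / (deriv a t)\<^sup>2)"
  by (simp add: eta_def divide_inverse algebra_simps)

lemma fpos_eq_pos:
  assumes "0 < s" "s < \<tau>"
  shows "fpos a \<tau> s = sqrt_gap a \<tau> s * eta_int a \<tau> s
    + (sqrt_gap a \<tau> s / a \<tau> - 1) * (1 / deriv a s - 1 / deriv a \<tau>)"
proof -
  have "((\<lambda>t. sqrt_gap a \<tau> s * eta a \<tau> t + (sqrt_gap a \<tau> s / a \<tau> - 1) * (deriv (deriv a) t / (deriv a t)\<^sup>2))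
      has_integral (sqrt_gap a \<tau> s * eta_int a \<tau> s
        + (sqrt_gap a \<tau> s / a \<tau> - 1) * (1 / deriv a s - 1 / deriv a \<tau>))) {s..\<tau>}"
    using assms by (intro has_integral_add has_integral_mult_right has_integral_eta_int has_integral_curvature) auto
  then show ?thesis
    unfolding fpos_def sqrt_gap_def[symmetric] fpos_integrand_split by (rule integral_unique)
qed

lemma fpos_eq_0:
  assumes "\<tau> > 0"
  shows "fpos a \<tau> 0 = a \<tau> * eta_int a \<tau> 0"
proof -
  have "fpos a \<tau> 0 = integral {0..\<tau>} (\<lambda>t. a \<tau> * eta a \<tau> t)"
    unfolding fpos_def sqrt_gap_def[symmetric] fpos_integrand_split using assms a_pos[of \<tau>]
    by (simp add: sqrt_gap_0)
  also have "\<dots> = a \<tau> * eta_int a \<tau> 0"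
    by (intro integral_unique has_integral_mult_right has_integral_eta_int) (use assms in auto)
  finally show ?thesis .
qed

lemma sqrt_gap_nonneg: "\<bar>t\<bar> \<le> \<bar>\<tau>\<bar> \<Longrightarrow> sqrt_gap a \<tau> t \<ge> 0"
  using a_less_a_iff[of \<tau> t] a_nonneg[of t] power_mono[of "a t" "a \<tau>" 2]
  by (simp add: sqrt_gap_def not_less)

lemma sqrt_gap_div_minus_1:
  assumes "\<bar>s\<bar> \<le> \<tau>" "\<tau> \<noteq> 0"
  shows "sqrt_gap a \<tau> s / a \<tau> - 1 = - (a s)\<^sup>2 / (a \<tau> * (sqrt_gap a \<tau> s + a \<tau>))"
proof -
  have "(sqrt_gap a \<tau> s - a \<tau>) * (sqrt_gap a \<tau> s + a \<tau>) = - (a s)\<^sup>2"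
    using sqrt_gap_squared[of s \<tau>] assms by (simp add: algebra_simps power2_eq_square)
  moreover have "sqrt_gap a \<tau> s + a \<tau> > 0" using a_pos[OF assms(2)] sqrt_gap_nonneg[of s \<tau>] assms by simp
  ultimately have "(sqrt_gap a \<tau> s - a \<tau>) / a \<tau> = - (a s)\<^sup>2 / (a \<tau> * (sqrt_gap a \<tau> s + a \<tau>))"
    by (metis mult_divide_mult_cancel_right order_less_irrefl mult.commute)
  then show ?thesis using a_pos[OF assms(2)] by (simp add: diff_divide_distrib)
qed

lemma fpos_eq_closed:
  assumes "0 \<le> s" "s < \<tau>"
  shows "fpos a \<tau> s = fpos_closed a \<tau> s"
proof (cases "s = 0")
  case True
  then show ?thesis using fpos_eq_0[of \<tau>] assms sqrt_gap_0[of \<tau>] deriv_pos[of \<tau>] a_pos[of \<tau>]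
    by (simp add: fpos_closed_def sq_over_deriv_def)
next
  case False
  then have "s > 0" using assms by simp
  then show ?thesis
    using fpos_eq_pos[OF _ assms(2)] sqrt_gap_div_minus_1[of s \<tau>] assms
    by (simp add: fpos_closed_def sq_over_deriv_def right_diff_distrib)
qed

lemma has_real_derivative_sqrt_gap:
  assumes "0 < s" "s < \<tau>"
  shows "(sqrt_gap a \<tau> has_real_derivative - (a s * deriv a s / sqrt_gap a \<tau> s)) (at s)"
proof -
  have pos: "(a \<tau>)\<^sup>2 - (a s)\<^sup>2 > 0" using sqrt_gap_pos[of s \<tau>] assms by (simp add: sqrt_gap_def)
  have "((\<lambda>x. (a \<tau>)\<^sup>2 - (a x)\<^sup>2) has_real_derivative - (2 * a s * deriv a s)) (at s)"
    using has_deriv[OF assms(1)] by (auto intro!: derivative_eq_intros)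
  from DERIV_chain2[OF DERIV_real_sqrt[OF pos] this]
  show ?thesis using pos unfolding sqrt_gap_def by (simp add: field_simps)
qed

lemma continuous_on_eta:
  assumes "0 < l" "c < \<tau>"
  shows "continuous_on {l..c} (eta a \<tau>)"
proof -
  have "isCont (deriv (deriv a)) x \<and> isCont (deriv a) x \<and> deriv a x \<noteq> 0 \<and> sqrt_gap a \<tau> x \<noteq> 0 \<and> a \<tau> \<noteq> 0"
    if "x \<in> {l..c}" for x
    using that assms isCont_deriv[of x] isCont_deriv2[of x] deriv_pos[of x] sqrt_gap_pos[of x \<tau>] a_pos[of \<tau>]
    by auto
  then show ?thesis unfolding eta_def
    by (intro continuous_intros continuous_at_imp_continuous_on ballI continuous_on_sqrt_gap_right) auto
qed

lemma has_real_derivative_eta_int: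
  assumes "0 < s" "s < \<tau>"
  shows "(eta_int a \<tau> has_real_derivative - eta a \<tau> s) (at s)"
  by (rule has_real_derivative_integral_lower[of "s / 2" s "(s + \<tau>) / 2" \<tau>])
    (use assms in \<open>auto intro!: continuous_on_eta has_integral_eta_int\<close>)

lemma has_real_derivative_fpos:
  assumes "0 < s" "s < \<tau>"
  shows "(fpos a \<tau> has_real_derivative fpos_deriv a \<tau> s) (at s)"
proof -
  define F where "F x = sqrt_gap a \<tau> x * eta_int a \<tau> x
    + (sqrt_gap a \<tau> x / a \<tau> - 1) * (inverse (deriv a x) - 1 / deriv a \<tau>)" for x
  have pos: "a \<tau> > 0" "sqrt_gap a \<tau> s > 0" "deriv a s > 0" "deriv a \<tau> > 0"
    using a_pos sqrt_gap_pos deriv_pos assms by auto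
  have "((\<lambda>x. inverse (deriv a x)) has_real_derivative
      - (deriv (deriv a) s * inverse (deriv a s ^ Suc (Suc 0)))) (at s)"
    by (rule DERIV_inverse_fun[OF has_deriv2[OF assms(1)]]) (use pos in simp)
  then have "(F has_real_derivative
      (- (a s * deriv a s / sqrt_gap a \<tau> s) * eta_int a \<tau> s + - eta a \<tau> s * sqrt_gap a \<tau> s)
      + ((- (a s * deriv a s / sqrt_gap a \<tau> s) / a \<tau> - 0) * (inverse (deriv a s) - 1 / deriv a \<tau>)
      + (- (deriv (deriv a) s * inverse (deriv a s ^ Suc (Suc 0))) - 0) * (sqrt_gap a \<tau> s / a \<tau> - 1))) (at s)"
    unfolding F_def
    by (intro DERIV_add DERIV_mult DERIV_diff DERIV_cdivide DERIV_const
        has_real_derivative_sqrt_gap[OF assms] has_real_derivative_eta_int[OF assms])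
  moreover have "(- (a s * deriv a s / sqrt_gap a \<tau> s) * eta_int a \<tau> s + - eta a \<tau> s * sqrt_gap a \<tau> s)
      + ((- (a s * deriv a s / sqrt_gap a \<tau> s) / a \<tau> - 0) * (inverse (deriv a s) - 1 / deriv a \<tau>)
      + (- (deriv (deriv a) s * inverse (deriv a s ^ Suc (Suc 0))) - 0) * (sqrt_gap a \<tau> s / a \<tau> - 1))
    = - (a s * deriv a s / sqrt_gap a \<tau> s) * (eta_int a \<tau> s + (1 / deriv a s - 1 / deriv a \<tau>) / a \<tau>)"
    using pos unfolding eta_def by (simp add: field_simps power2_eq_square)
  ultimately have "(F has_real_derivative - (a s * deriv a s / sqrt_gap a \<tau> s) *
      (eta_int a \<tau> s + (1 / deriv a s - 1 / deriv a \<tau>) / a \<tau>)) (at s)" by simp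
  then show ?thesis unfolding fpos_deriv_def
  proof (rule has_field_derivative_transform_within_open[of _ _ _ "{0<..<\<tau>}"])
    show "\<And>x. x \<in> {0<..<\<tau>} \<Longrightarrow> F x = fpos a \<tau> x"
      using fpos_eq_pos by (simp add: F_def inverse_eq_divide)
  qed (use assms in auto)
qed


lemma continuous_on_sq_over_deriv: "continuous_on {0..} (sq_over_deriv a)"
proof (rule continuous_on_atLeast_right_limit)
  have "continuous_on {0<..} (\<lambda>s. (a s)\<^sup>2 / deriv a s)"
    using deriv_pos by (intro continuous_intros continuous_on_deriv continuous_on_a) force
  then show "continuous_on {0<..} (sq_over_deriv a)"
    by (rule continuous_on_cong[THEN iffD1, rotated 2]) (auto simp: sq_over_deriv_def)
  have "\<forall>\<^sub>F s in at_right 0. (a s)\<^sup>2 / deriv a s = sq_over_deriv a s"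
    by (simp add: eventually_at_filter sq_over_deriv_def)
  from tendsto_cong[OF this] sq_over_deriv_tendsto
  show "(sq_over_deriv a \<longlongrightarrow> sq_over_deriv a 0) (at_right 0)" by (simp add: sq_over_deriv_def[of a 0])
qed

lemma continuous_on_deriv_ext: "continuous_on {0..} (deriv_ext a L)"
proof (rule continuous_on_atLeast_right_limit)
  show "continuous_on {0<..} (deriv_ext a L)"
    using continuous_on_deriv by (rule continuous_on_cong[THEN iffD1, rotated 2]) (auto simp: deriv_ext_def)
  have "\<forall>\<^sub>F s in at_right 0. deriv a s = deriv_ext a L s"
    by (simp add: eventually_at_filter deriv_ext_def)
  from tendsto_cong[OF this] deriv_tendsto
  show "(deriv_ext a L \<longlongrightarrow> deriv_ext a L 0) (at_right 0)" by (simp add: deriv_ext_def[of a L 0])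
qed

lemma continuous_on_half_wedge_snd:
  assumes "continuous_on {0..} f"
  shows "continuous_on half_wedge (\<lambda>p. f (snd p))"
  by (rule continuous_on_compose2[OF assms continuous_on_snd[OF continuous_on_id]])
    (auto simp: half_wedge_def)

lemma continuous_on_half_wedge_deriv: "continuous_on half_wedge (\<lambda>p. deriv a (fst p))"
  by (rule continuous_on_compose2[OF continuous_on_deriv continuous_on_fst[OF continuous_on_id]])
    (auto simp: half_wedge_def)

lemma continuous_on_half_wedge_eta_int: "continuous_on half_wedge (\<lambda>p. eta_int a (fst p) (snd p))"
  by (rule continuous_on_subset[OF continuous_on_eta_int]) (auto simp: half_wedge_def)

lemma half_wedge_pos:
  "p \<in> half_wedge \<Longrightarrow> a (fst p) > 0 \<and> sqrt_gap a (fst p) (snd p) > 0 \<and> deriv a (fst p) > 0"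
  using a_pos[of "fst p"] sqrt_gap_pos[of "snd p" "fst p"] deriv_pos[of "fst p"]
  by (auto simp: half_wedge_def)

lemma continuous_on_fpos_closed: "continuous_on half_wedge (\<lambda>p. fpos_closed a (fst p) (snd p))"
  unfolding fpos_closed_def
  using half_wedge_pos
  by (intro continuous_intros continuous_on_sqrt_gap continuous_on_half_wedge_eta_int
      continuous_on_half_wedge_deriv continuous_on_half_wedge_snd[OF continuous_on_sq_over_deriv]
      continuous_on_compose2[OF continuous_on_a continuous_on_fst[OF continuous_on_id]])
    (force simp: add_pos_pos)+

lemma continuous_on_ff_rho_deriv: "continuous_on half_wedge (\<lambda>p. ff_rho_deriv a L (fst p) (snd p))"
  unfolding ff_rho_deriv_def
  using half_wedge_pos
  by (intro continuous_intros continuous_on_half_wedge_eta_int continuous_on_half_wedge_deriv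
      continuous_on_half_wedge_snd[OF continuous_on_deriv_ext]
      continuous_on_compose2[OF continuous_on_a continuous_on_fst[OF continuous_on_id]]) force+

lemma continuous_on_ff: "continuous_on wedge (\<lambda>p. ff a (fst p) (snd p))"
proof -
  define S where "S = wedge \<inter> {p. snd p \<ge> 0}"
  define T where "T = wedge \<inter> {p. snd p \<le> 0}"
  have ST: "S \<union> T = wedge" by (auto simp: S_def T_def)
  have closed: "closedin (top_of_set (S \<union> T)) S" "closedin (top_of_set (S \<union> T)) T"
    unfolding ST unfolding S_def T_def
    by (intro closedin_closed_Int closed_Collect_le continuous_intros)+
  have "continuous_on S (\<lambda>p. fpos_closed a (fst p) (snd p))"
    by (rule continuous_on_subset[OF continuous_on_fpos_closed]) (auto simp: S_def wedge_def half_wedge_def)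
  moreover have "continuous_on T (\<lambda>p. 2 * fpos_closed a (fst p) 0 - fpos_closed a (fst p) (- snd p))"
  proof -
    have sub: "(\<lambda>p. (fst p, 0::real)) ` T \<subseteq> half_wedge" "(\<lambda>p. (fst p, - snd p)) ` T \<subseteq> half_wedge"
      by (auto simp: T_def wedge_def half_wedge_def)
    have "continuous_on T (\<lambda>p. (fst p, 0::real))" "continuous_on T (\<lambda>p. (fst p, - snd p))"
      by (intro continuous_intros)+
    from continuous_on_compose2[OF continuous_on_fpos_closed this(1) sub(1)]
      continuous_on_compose2[OF continuous_on_fpos_closed this(2) sub(2)]
    have "continuous_on T (\<lambda>p. fpos_closed a (fst p) 0)" "continuous_on T (\<lambda>p. fpos_closed a (fst p) (- snd p))"
      by simp_all
    then show ?thesis by (intro continuous_intros)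
  qed
  ultimately have "continuous_on (S \<union> T) (\<lambda>p. if 0 \<le> snd p then fpos_closed a (fst p) (snd p)
      else 2 * fpos_closed a (fst p) 0 - fpos_closed a (fst p) (- snd p))"
    by (rule continuous_on_cases_local[OF closed]) (auto simp: S_def T_def)
  then show ?thesis unfolding ST
    by (rule continuous_on_cong[THEN iffD1, rotated 2]) (auto simp: ff_def wedge_def fpos_eq_closed)
qed

lemma has_real_derivative_ff:
  assumes "\<bar>s\<bar> < \<tau>" "s \<noteq> 0"
  shows "(ff a \<tau> has_real_derivative fpos_deriv a \<tau> \<bar>s\<bar>) (at s)"
proof (cases "s > 0")
  case True
  then have "(fpos a \<tau> has_real_derivative fpos_deriv a \<tau> \<bar>s\<bar>) (at s)"
    using has_real_derivative_fpos[of s \<tau>] assms by simp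
  then show ?thesis
    by (rule has_field_derivative_transform_within_open[of _ _ _ "{0<..<\<tau>}"])
      (use True assms in \<open>auto simp: ff_def\<close>)
next
  case False
  then have "s < 0" using assms by simp
  then have "((\<lambda>x. 2 * fpos a \<tau> 0 - fpos a \<tau> (- x)) has_real_derivative fpos_deriv a \<tau> \<bar>s\<bar>) (at s)"
    using has_real_derivative_fpos[of "- s" \<tau>] assms
    by (auto intro!: derivative_eq_intros DERIV_chain2[where f = "fpos a \<tau>"])
  then show ?thesis
    by (rule has_field_derivative_transform_within_open[of _ _ _ "{-\<tau><..<0}"])
      (use \<open>s < 0\<close> assms in \<open>auto simp: ff_def\<close>)
qed

text \<open>The chain rule through \<open>t0\<close>: \<open>\<partial>\<^sub>s ff\<close> divided by \<open>\<partial>\<^sub>s rho_int = - a / sqrt_gap\<close>.\<close>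
lemma fpos_deriv_div_rho_deriv:
  assumes "0 < s" "s < \<tau>"
  shows "fpos_deriv a \<tau> s * inverse (- (a s / sqrt_gap a \<tau> s)) = ff_rho_deriv a L \<tau> s"
  using a_pos[of s] sqrt_gap_pos[of s \<tau>] deriv_pos[of s] a_pos[of \<tau>] deriv_pos[of \<tau>] assms
  by (simp add: fpos_deriv_def ff_rho_deriv_def deriv_ext_def field_simps)

end

section \<open>The derivative of \<open>g\<^sub>\<tau>\<^sub>\<tau>\<close>\<close>

definition gtt_rho_deriv :: "(real \<Rightarrow> real) \<Rightarrow> real \<Rightarrow> real \<Rightarrow> real \<Rightarrow> real" where
  "gtt_rho_deriv a L \<tau> \<rho> = 2 * deriv a \<tau> * (1 - deriv a \<tau> * ff a \<tau> (t0 a \<tau> \<rho>)) *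
     ff_rho_deriv a L \<tau> \<bar>t0 a \<tau> \<rho>\<bar>"

context even_scale_factor begin

lemma t0_in_wedge: "(\<tau>, \<rho>) \<in> domD a \<Longrightarrow> (\<tau>, t0 a \<tau> \<rho>) \<in> wedge"
  using t0_rho_int[of \<tau> \<rho>] domD_iff by (auto simp: wedge_def)

lemma abs_t0_in_half_wedge: "(\<tau>, \<rho>) \<in> domD a \<Longrightarrow> (\<tau>, \<bar>t0 a \<tau> \<rho>\<bar>) \<in> half_wedge"
  using t0_in_wedge[of \<tau> \<rho>] by (auto simp: wedge_def half_wedge_def abs_less_iff)

lemma isCont_t0_fibre:
  assumes "(\<tau>, \<rho>) \<in> domD a"
  shows "isCont (t0 a \<tau>) \<rho>"
proof -
  have "Pair \<tau> ` {0<..<2 * rho_int a \<tau> 0} \<subseteq> domD a" using assms by (auto simp: domD_iff)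
  from continuous_on_compose2[OF continuous_on_t0 _ this]
  have "continuous_on {0<..<2 * rho_int a \<tau> 0} (t0 a \<tau>)" by (simp add: continuous_intros)
  then show ?thesis using assms by (simp add: domD_iff continuous_on_eq_continuous_at)
qed

lemma has_real_derivative_ff_t0_off_0:
  assumes D: "(\<tau>, \<rho>) \<in> domD a" and "t0 a \<tau> \<rho> \<noteq> 0"
  shows "((\<lambda>r. ff a \<tau> (t0 a \<tau> r)) has_real_derivative ff_rho_deriv a L \<tau> \<bar>t0 a \<tau> \<rho>\<bar>) (at \<rho>)"
proof -
  define s where "s = t0 a \<tau> \<rho>"
  have \<rho>: "0 < \<rho>" "\<rho> < 2 * rho_int a \<tau> 0" using D domD_iff by auto
  have s: "\<bar>s\<bar> < \<tau>" "s \<noteq> 0" using t0_rho_int[OF D] assms(2) by (auto simp: s_def)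
  have "(rho_int a \<tau> has_real_derivative - (a s / sqrt_gap a \<tau> s)) (at (t0 a \<tau> \<rho>))"
    using has_real_derivative_rho_int[of \<tau> s] s by (simp add: s_def)
  moreover have "- (a s / sqrt_gap a \<tau> s) \<noteq> 0" using a_pos[of s] sqrt_gap_pos[of s \<tau>] s by simp
  moreover have "rho_int a \<tau> (t0 a \<tau> y) = y" if "0 < y" "y < 2 * rho_int a \<tau> 0" for y
    using t0_rho_int[of \<tau> y] that \<rho> D by (auto simp: domD_iff)
  ultimately have "(t0 a \<tau> has_real_derivative inverse (- (a s / sqrt_gap a \<tau> s))) (at \<rho>)"
    using DERIV_inverse_function \<rho> isCont_t0_fibre[OF D] by blast
  from DERIV_chain2[OF has_real_derivative_ff[OF s, unfolded s_def] this[unfolded s_def]]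
  have "((\<lambda>r. ff a \<tau> (t0 a \<tau> r)) has_real_derivative
      fpos_deriv a \<tau> \<bar>s\<bar> * inverse (- (a s / sqrt_gap a \<tau> s))) (at \<rho>)"
    by (simp add: s_def)
  moreover have "fpos_deriv a \<tau> \<bar>s\<bar> * inverse (- (a s / sqrt_gap a \<tau> s)) = ff_rho_deriv a L \<tau> \<bar>s\<bar>"
    using fpos_deriv_div_rho_deriv[of "\<bar>s\<bar>" \<tau>] s by (simp add: a_abs sqrt_gap_abs)
  ultimately show ?thesis by (simp add: s_def)
qed

text \<open>Where \<open>t0\<close> vanishes so does \<open>\<partial>\<^sub>s rho_int = - a / sqrt_gap\<close>, and \<open>t0\<close> itself is not
  differentiable in \<open>\<rho>\<close>; there the composite is handled by continuity of its derivative elsewhere.\<close>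
lemma has_real_derivative_ff_t0:
  assumes D: "(\<tau>, \<rho>) \<in> domD a"
  shows "((\<lambda>r. ff a \<tau> (t0 a \<tau> r)) has_real_derivative ff_rho_deriv a L \<tau> \<bar>t0 a \<tau> \<rho>\<bar>) (at \<rho>)"
proof (cases "t0 a \<tau> \<rho> = 0")
  case True
  define I where "I = {0<..<2 * rho_int a \<tau> 0}"
  have I: "r \<in> I \<longleftrightarrow> (\<tau>, r) \<in> domD a" for r using D by (auto simp: I_def domD_iff)
  have cont_t0: "continuous_on I (t0 a \<tau>)"
    using isCont_t0_fibre I by (auto intro: continuous_at_imp_continuous_on)
  have m: "continuous_on I (\<lambda>r. (\<tau>, t0 a \<tau> r))" "continuous_on I (\<lambda>r. (\<tau>, \<bar>t0 a \<tau> r\<bar>))"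
    using cont_t0 by (auto intro!: continuous_intros)
  have sub: "(\<lambda>r. (\<tau>, t0 a \<tau> r)) ` I \<subseteq> wedge" "(\<lambda>r. (\<tau>, \<bar>t0 a \<tau> r\<bar>)) ` I \<subseteq> half_wedge"
    using t0_in_wedge abs_t0_in_half_wedge I by auto
  have cont_ff: "continuous_on I (\<lambda>r. ff a \<tau> (t0 a \<tau> r))"
    using continuous_on_compose2[OF continuous_on_ff m(1) sub(1)] by simp
  have cont_deriv: "continuous_on I (\<lambda>r. ff_rho_deriv a L \<tau> \<bar>t0 a \<tau> r\<bar>)"
    using continuous_on_compose2[OF continuous_on_ff_rho_deriv m(2) sub(2)] by simp
  show ?thesis
  proof (rule has_real_derivative_of_punctured[OF _ _ cont_ff[unfolded I_def] cont_deriv[unfolded I_def]])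
    show "0 < \<rho>" "\<rho> < 2 * rho_int a \<tau> 0" using D by (auto simp: domD_iff)
    fix y assume y: "0 < y" "y < 2 * rho_int a \<tau> 0" "y \<noteq> \<rho>"
    then have Dy: "(\<tau>, y) \<in> domD a" using I[of y] by (simp add: I_def)
    have "t0 a \<tau> y \<noteq> 0" using t0_rho_int(3)[OF Dy] t0_rho_int(3)[OF D] True y by auto
    then show "((\<lambda>r. ff a \<tau> (t0 a \<tau> r)) has_real_derivative ff_rho_deriv a L \<tau> \<bar>t0 a \<tau> y\<bar>) (at y)"
      by (rule has_real_derivative_ff_t0_off_0[OF Dy])
  qed
qed (use has_real_derivative_ff_t0_off_0 D in blast)

lemma has_real_derivative_gtt:
  assumes "(\<tau>, \<rho>) \<in> domD a"
  shows "(gtt a \<tau> has_real_derivative gtt_rho_deriv a L \<tau> \<rho>) (at \<rho>)"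
  unfolding gtt_def[abs_def] gtt_rho_deriv_def
  using has_real_derivative_ff_t0[OF assms]
  by (auto intro!: derivative_eq_intros simp: algebra_simps)

lemma continuous_on_gtt_rho_deriv: "continuous_on (domD a) (\<lambda>p. gtt_rho_deriv a L (fst p) (snd p))"
proof -
  have "fst p > 0" if "p \<in> domD a" for p using that domD_iff[of "fst p" "snd p"] by simp
  then have "continuous_on (domD a) (\<lambda>p. deriv a (fst p))"
    by (intro continuous_on_compose2[OF continuous_on_deriv continuous_on_fst[OF continuous_on_id]]) auto
  moreover
  have m: "continuous_on (domD a) (\<lambda>p. (fst p, t0 a (fst p) (snd p)))"
    "continuous_on (domD a) (\<lambda>p. (fst p, \<bar>t0 a (fst p) (snd p)\<bar>))"
    using continuous_on_t0 by (auto intro!: continuous_intros)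
  have sub: "(\<lambda>p. (fst p, t0 a (fst p) (snd p))) ` domD a \<subseteq> wedge"
    "(\<lambda>p. (fst p, \<bar>t0 a (fst p) (snd p)\<bar>)) ` domD a \<subseteq> half_wedge"
    using t0_in_wedge abs_t0_in_half_wedge by (auto simp: image_subset_iff)
  have "continuous_on (domD a) (\<lambda>p. ff a (fst p) (t0 a (fst p) (snd p)))"
    using continuous_on_compose2[OF continuous_on_ff m(1) sub(1)] by simp
  moreover have "continuous_on (domD a) (\<lambda>p. ff_rho_deriv a L (fst p) \<bar>t0 a (fst p) (snd p)\<bar>)"
    using continuous_on_compose2[OF continuous_on_ff_rho_deriv m(2) sub(2)] by simp
  ultimately show ?thesis unfolding gtt_rho_deriv_def by (intro continuous_intros)
qed

end

section \<open>Strongly regular scale factors satisfy the locale\<close>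

lemma regular_scale_factor_deriv_pos:
  assumes reg: "regular_scale_factor a" and t: "0 < t"
  shows "deriv a t > 0"
proof -
  have "(a has_real_derivative deriv a t) (at t)"
    using reg t DERIV_deriv_iff_real_differentiable unfolding regular_scale_factor_def by blast
  moreover have "\<not> deriv a t < 0"
  proof
    assume "deriv a t < 0"
    from DERIV_neg_dec_right[OF calculation this] obtain d where
      "d > 0" "\<And>h. h > 0 \<Longrightarrow> h < d \<Longrightarrow> a (t + h) < a t" by blast
    then have "a (t + d / 2) < a t" by simp
    moreover have "a t < a (t + d / 2)"
      using reg t \<open>d > 0\<close> unfolding regular_scale_factor_def strict_mono_on_def by auto
    ultimately show False by simp
  qed
  ultimately show ?thesis using reg t unfolding regular_scale_factor_def by force
qed

lemma strongly_regular_curvature_bound: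
  assumes "strongly_regular_scale_factor a"
  obtains K where "\<And>t. 0 < t \<Longrightarrow> \<bar>deriv (deriv a) t / (deriv a t)\<^sup>2\<bar> \<le> K / a t"
proof -
  obtain K where K: "K \<ge> 1" "\<And>t. t > 0 \<Longrightarrow> a t * deriv (deriv a) t / (deriv a t)\<^sup>2 \<ge> - K"
    and reg: "regular_scale_factor a"
    using assms unfolding strongly_regular_scale_factor_def by blast
  have "\<bar>deriv (deriv a) t / (deriv a t)\<^sup>2\<bar> \<le> K / a t" if t: "0 < t" for t
  proof -
    have "a t > 0"
      using reg t unfolding regular_scale_factor_def strict_mono_on_def by (metis atLeast_iff less_eq_real_def)
    moreover have "- K \<le> a t * deriv (deriv a) t / (deriv a t)\<^sup>2"
      "a t * deriv (deriv a) t / (deriv a t)\<^sup>2 \<le> 1"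
      using K reg t unfolding regular_scale_factor_def by auto
    then have "\<bar>a t * (deriv (deriv a) t / (deriv a t)\<^sup>2)\<bar> \<le> K"
      using K(1) by (simp only: times_divide_eq_right abs_le_iff) linarith
    ultimately show ?thesis by (simp add: abs_mult field_simps)
  qed
  then show ?thesis by (rule that)
qed

lemma sq_over_deriv_le_if_convex:
  assumes reg: "regular_scale_factor a"
    and convex: "\<And>t. 0 < t \<Longrightarrow> t < \<epsilon> \<Longrightarrow> deriv (deriv a) t \<ge> 0" and s: "0 < s" "s < \<epsilon>"
  shows "0 \<le> (a s)\<^sup>2 / deriv a s \<and> (a s)\<^sup>2 / deriv a s \<le> a s * s"
proof -
  have d: "\<And>t. 0 < t \<Longrightarrow> (a has_real_derivative deriv a t) (at t)"
    "\<And>t. 0 < t \<Longrightarrow> (deriv a has_real_derivative deriv (deriv a) t) (at t)"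
    using reg DERIV_deriv_iff_real_differentiable unfolding regular_scale_factor_def by blast+
  have "a 0 = 0" "continuous_on {0..} a" using reg unfolding regular_scale_factor_def by auto
  then have "a s \<le> s * deriv a s"
    using le_mult_deriv_if_convex_near_0[OF _ _ d convex s] by blast
  moreover have "deriv a s > 0" using regular_scale_factor_deriv_pos[OF reg] s by simp
  moreover have "a s \<ge> 0" using reg s unfolding regular_scale_factor_def by simp
  ultimately have "a s * a s \<le> deriv a s * (s * a s)"
    using mult_right_mono[of "a s" "s * deriv a s" "a s"] by (simp add: algebra_simps)
  with \<open>deriv a s > 0\<close> \<open>a s \<ge> 0\<close> show ?thesis by (simp add: power2_eq_square divide_le_eq mult.commute)
qed

text \<open>In case (i), \<open>0 \<le> a\<^sup>2/\<dot>a \<le> s a(s)\<close> near \<open>0\<close> by convexity.\<close>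
lemma sq_over_deriv_tendsto_0:
  assumes reg: "regular_scale_factor a"
    and cases: "((deriv a \<longlongrightarrow> 0) (at_right 0) \<and>
                  (\<exists>\<epsilon>>0. \<forall>t. 0 < t \<and> t < \<epsilon> \<longrightarrow> deriv (deriv a) t \<ge> 0))
              \<or> (\<exists>L>0. (deriv a \<longlongrightarrow> L) (at_right 0))"
  shows "((\<lambda>s. (a s)\<^sup>2 / deriv a s) \<longlongrightarrow> 0) (at_right 0)"
proof -
  have a_lim: "(a \<longlongrightarrow> 0) (at_right 0)"
    using reg unfolding regular_scale_factor_def continuous_on_eq_continuous_within
    by (metis atLeast_iff continuous_within order_refl at_within_Ici_at_right)
  show ?thesis
  proof (cases "\<exists>L>0. (deriv a \<longlongrightarrow> L) (at_right 0)")
    case True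
    then obtain L where "L > 0" "(deriv a \<longlongrightarrow> L) (at_right 0)" by blast
    then show ?thesis using tendsto_divide[OF tendsto_power[OF a_lim, of 2]] by force
  next
    case False
    then obtain \<epsilon> where "\<epsilon> > 0" and convex: "\<And>t. 0 < t \<Longrightarrow> t < \<epsilon> \<Longrightarrow> deriv (deriv a) t \<ge> 0"
      using cases by blast
    have "\<forall>\<^sub>F s in at_right 0. 0 < s \<and> s < \<epsilon>"
      using eventually_at_right_real[OF \<open>\<epsilon> > 0\<close>] by simp
    then have "\<forall>\<^sub>F s in at_right 0. 0 \<le> (a s)\<^sup>2 / deriv a s \<and> (a s)\<^sup>2 / deriv a s \<le> a s * s"
      by (rule eventually_mono) (use sq_over_deriv_le_if_convex[OF reg convex] in blast)
    then have "\<forall>\<^sub>F s in at_right 0. 0 \<le> (a s)\<^sup>2 / deriv a s"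
      "\<forall>\<^sub>F s in at_right 0. (a s)\<^sup>2 / deriv a s \<le> a s * s"
      by (simp_all add: eventually_conj_iff)
    moreover have "((\<lambda>s. a s * s) \<longlongrightarrow> 0) (at_right 0)"
      using tendsto_mult[OF a_lim tendsto_ident_at] by simp
    ultimately show ?thesis
      using tendsto_sandwich[of "\<lambda>_. 0" "\<lambda>s. (a s)\<^sup>2 / deriv a s" "at_right 0" "\<lambda>s. a s * s" 0]
      by simp
  qed
qed

lemma even_scale_factor_if_strongly_regular:
  assumes sr: "strongly_regular_scale_factor a"
    and even: "\<And>t. a (- t) = a t"
    and cases: "((deriv a \<longlongrightarrow> 0) (at_right 0) \<and>
                  (\<exists>\<epsilon>>0. \<forall>t. 0 < t \<and> t < \<epsilon> \<longrightarrow> deriv (deriv a) t \<ge> 0))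
              \<or> (\<exists>L>0. (deriv a \<longlongrightarrow> L) (at_right 0))"
  obtains K L where "even_scale_factor a K L"
proof -
  have reg: "regular_scale_factor a" using sr unfolding strongly_regular_scale_factor_def by blast
  obtain K where K: "\<And>t. 0 < t \<Longrightarrow> \<bar>deriv (deriv a) t / (deriv a t)\<^sup>2\<bar> \<le> K / a t"
    using strongly_regular_curvature_bound[OF sr] by blast
  obtain L where "(deriv a \<longlongrightarrow> L) (at_right 0)" using cases by blast
  with reg K show ?thesis
    using that[of K L] even regular_scale_factor_deriv_pos[OF reg] sq_over_deriv_tendsto_0[OF reg cases]
    unfolding even_scale_factor_def regular_scale_factor_def
    by (simp add: DERIV_deriv_iff_real_differentiable)
qed

theorem theorem5p12:
  fixes a :: "real \<Rightarrow> real"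
  assumes sr: "strongly_regular_scale_factor a"
    and even: "\<And>t. a (- t) = a t"
    and cases: "((deriv a \<longlongrightarrow> 0) (at_right 0) \<and>
                  (\<exists>\<epsilon>>0. \<forall>t. 0 < t \<and> t < \<epsilon> \<longrightarrow> deriv (deriv a) t \<ge> 0))
              \<or> (\<exists>L>0. (deriv a \<longlongrightarrow> L) (at_right 0))"
  shows "(\<forall>(\<tau>, \<rho>)\<in>domD a. (\<lambda>r. gtt a \<tau> r) differentiable (at \<rho>))
       \<and> continuous_on (domD a) (\<lambda>(\<tau>, \<rho>). deriv (\<lambda>r. gtt a \<tau> r) \<rho>)"
proof -
  obtain K L where "even_scale_factor a K L"
    using even_scale_factor_if_strongly_regular[OF sr even cases] .
  then interpret even_scale_factor a K L .
  have deriv: "(gtt a \<tau> has_real_derivative gtt_rho_deriv a L \<tau> \<rho>) (at \<rho>)" if "(\<tau>, \<rho>) \<in> domD a" for \<tau> \<rho>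
    using has_real_derivative_gtt[OF that] .
  then have "\<forall>(\<tau>, \<rho>)\<in>domD a. gtt a \<tau> differentiable (at \<rho>)"
    by (auto simp: real_differentiable_def)
  moreover have "continuous_on (domD a) (\<lambda>(\<tau>, \<rho>). deriv (gtt a \<tau>) \<rho>)"
    using continuous_on_gtt_rho_deriv
    by (rule continuous_on_cong[THEN iffD1, rotated 2]) (auto simp: DERIV_imp_deriv[OF deriv])
  ultimately show ?thesis by simp
qed

end
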